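(* Let $\rho\colon\mathrm{Isom}(\mathbf H^1_{\mathbb C})_o\to\mathrm{Isom}(\mathbf H^\infty_{\mathbb C})_o$ be a non-elementary representation with $\ell(\rho)=2$. Then $b\mapsto c(b)$ is a non-trivial $\mathbb R$-linear map $\mathbb R\to E$, and $\mathrm{Im}\,K(b)=0$ for every $b\in\mathbb R$.
   Context: $\mathcal H$: separable complex Hilbert space with strongly non-degenerate Hermitian form $B$ (linear in the first variable) of signature $(1,\infty)$; $\mathbf H^\infty_{\mathbb C}=\{[v]:B(v,v)>0\}$, $\cosh d([v],[w])=|B(v,w)|/\sqrt{B(v,v)B(w,w)}$, boundary = isotropic lines, $\mathrm{Isom}(\mathbf H^\infty_{\mathbb C})_o=PU(B)$. $\mathbf H^1_{\mathbb C}$: $\mathbb C^2$ with $B(z,w)=z_1\bar w_1-z_2\bar w_2$, $\xi_1=(e_1+e_2)/\sqrt2$, $\xi_2=(e_1-e_2)/\sqrt2$; $g(\lambda,b)\in SU(1,1)$ has matrix $\begin{pmatrix}\lambda&ib\\0&\lambda^{-1}\end{pmatrix}$ in basis $(\xi_1,\xi_2)$. Representations are orbitally continuous homomorphisms; non-elementary = no fixed point in $\mathbf H^\infty_{\mathbb C}\cup\partial\mathbf H^\infty_{\mathbb C}$ and no invariant pair of boundary points. For such $\rho$: $\eta_1$ is the unique common fixed boundary point of the $\rho(g(\lambda,b))$, $\eta_2$ the other endpoint of the common axis of the hyperbolic $\rho(g(\lambda,0))$, $\lambda\neq1$; isotropic representatives with $B(\eta_1,\eta_2)=1$; $E=\eta_1^\perp\cap\eta_2^\perp$.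 The lift $T_b\in U(B)$ of $\rho(g(1,b))$ with $T_b\eta_1=\eta_1$ satisfies $T_b\eta_2=K(b)\eta_1+\eta_2+c(b)$ with $K(b)\in\mathbb C$, $c(b)\in E$ (the paper writes $\Delta(b)=\mathrm{Im}K(b)$). $\ell(\rho)$ is the $t>0$ with $\inf_xd(\rho(g(\lambda,0))x,x)=t|\ln\lambda|$ for all $\lambda>0$. *)

theory Defs
  imports "HOL-Analysis.Analysis"
begin

text \<open>Every separable complex Hilbert space with a strongly non-degenerate Hermitian
form of signature (1,infinity) is isometric to the following standard model:
vectors are square-summable sequences nat => complex, coordinate 0 is the positive
direction and B(v,w) = v_0 conj(w_0) - sum_{n>=1} v_n conj(w_n).\<close>

type_synonym vec = "nat \<Rightarrow> complex"

definition l2 :: "vec set" where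
  "l2 = {v. summable (\<lambda>n. (cmod (v n))\<^sup>2)}"

definition l2normsq :: "vec \<Rightarrow> real" where
  "l2normsq v = (\<Sum>n. (cmod (v n))\<^sup>2)"

definition Bf :: "vec \<Rightarrow> vec \<Rightarrow> complex" where
  "Bf v w = v 0 * cnj (w 0) - (\<Sum>n. v (Suc n) * cnj (w (Suc n)))"

definition vzero :: vec where "vzero = (\<lambda>n. 0)"

definition vadd :: "vec \<Rightarrow> vec \<Rightarrow> vec" where "vadd v w = (\<lambda>n. v n + w n)"

definition vscale :: "complex \<Rightarrow> vec \<Rightarrow> vec" where "vscale a v = (\<lambda>n. a * v n)"

definition UB :: "(vec \<Rightarrow> vec) set" where
  "UB = {T. bij_betw T l2 l2
          \<and> (\<forall>v\<in>l2. \<forall>w\<in>l2. T (vadd v w) = vadd (T v) (T w))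
          \<and> (\<forall>a. \<forall>v\<in>l2. T (vscale a v) = vscale a (T v))
          \<and> (\<exists>C. \<forall>v\<in>l2. l2normsq (T v) \<le> C * l2normsq v)
          \<and> (\<forall>v\<in>l2. \<forall>w\<in>l2. Bf (T v) (T w) = Bf v w)}"

text \<open>Equality in PU(B) = U(B)/U(1): operators differing by a unit scalar.\<close>
definition proj_eq :: "(vec \<Rightarrow> vec) \<Rightarrow> (vec \<Rightarrow> vec) \<Rightarrow> bool" where
  "proj_eq T S \<longleftrightarrow> (\<exists>u. cmod u = 1 \<and> (\<forall>v\<in>l2. T v = vscale u (S v)))"

definition hyp_pt :: "vec \<Rightarrow> bool" where
  "hyp_pt v \<longleftrightarrow> v \<in> l2 \<and> Re (Bf v v) > 0"

definition isotropic :: "vec \<Rightarrow> bool" where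
  "isotropic v \<longleftrightarrow> v \<in> l2 \<and> v \<noteq> vzero \<and> Bf v v = 0"

definition same_line :: "vec \<Rightarrow> vec \<Rightarrow> bool" where
  "same_line v w \<longleftrightarrow> (\<exists>\<mu>. w = vscale \<mu> v)"

definition hdist :: "vec \<Rightarrow> vec \<Rightarrow> real" where
  "hdist v w = arcosh (cmod (Bf v w) / sqrt (Re (Bf v v) * Re (Bf w w)))"

definition B2 :: "complex^2 \<Rightarrow> complex^2 \<Rightarrow> complex" where
  "B2 z w = z$1 * cnj (w$1) - z$2 * cnj (w$2)"

definition SU11 :: "(complex^2^2) set" where
  "SU11 = {M. det M = 1 \<and> (\<forall>z w. B2 (M *v z) (M *v w) = B2 z w)}"

text \<open>Change of basis matrix whose columns are xi1 = (e1+e2)/sqrt 2, xi2 = (e1-e2)/sqrt 2.\<close>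
definition Pxi :: "complex^2^2" where
  "Pxi = (\<chi> i j. if i = 2 \<and> j = 2 then - complex_of_real (1 / sqrt 2)
                 else complex_of_real (1 / sqrt 2))"

definition gmat :: "real \<Rightarrow> real \<Rightarrow> complex^2^2" where
  "gmat l b = Pxi ** (\<chi> i j. if i = 1 \<and> j = 1 then complex_of_real l
                          else if i = 1 \<and> j = 2 then \<i> * complex_of_real b
                          else if i = 2 \<and> j = 2 then complex_of_real (1 / l)
                          else 0) ** matrix_inv Pxi"

text \<open>A representation of Isom(H^1_C)_o = PU(1,1) = SU(1,1)/{+-1} into
Isom(H^infty_C)_o = PU(B) is given by choosing, for every g in SU(1,1), a lift
rho g in U(B) of its image; it must be multiplicative modulo unit scalars, kill -1
modulo scalars, and be orbitally continuous.\<close>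
definition representation :: "(complex^2^2 \<Rightarrow> vec \<Rightarrow> vec) \<Rightarrow> bool" where
  "representation rho \<longleftrightarrow>
     (\<forall>g\<in>SU11. rho g \<in> UB)
   \<and> (\<forall>g\<in>SU11. \<forall>h\<in>SU11. proj_eq (rho (g ** h)) (rho g \<circ> rho h))
   \<and> proj_eq (rho (- mat 1)) id
   \<and> (\<forall>x. hyp_pt x \<longrightarrow> (\<forall>g\<in>SU11. \<forall>e>0. \<exists>d>0. \<forall>h\<in>SU11.
          dist h g < d \<longrightarrow> hdist (rho h x) (rho g x) < e))"

definition non_elementary :: "(complex^2^2 \<Rightarrow> vec \<Rightarrow> vec) \<Rightarrow> bool" where
  "non_elementary rho \<longleftrightarrow>
     \<not> (\<exists>v. v \<in> l2 \<and> v \<noteq> vzero \<and> Re (Bf v v) \<ge> 0 \<and>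
            (\<forall>g\<in>SU11. same_line v (rho g v)))
   \<and> \<not> (\<exists>p q. isotropic p \<and> isotropic q \<and> \<not> same_line p q \<and>
            (\<forall>g\<in>SU11. (same_line p (rho g p) \<and> same_line q (rho g q))
                     \<or> (same_line q (rho g p) \<and> same_line p (rho g q))))"

definition min_disp :: "(complex^2^2 \<Rightarrow> vec \<Rightarrow> vec) \<Rightarrow> real \<Rightarrow> real" where
  "min_disp rho l = Inf ((\<lambda>x. hdist (rho (gmat l 0) x) x) ` {x. hyp_pt x})"

definition has_ell :: "(complex^2^2 \<Rightarrow> vec \<Rightarrow> vec) \<Rightarrow> real \<Rightarrow> bool" where
  "has_ell rho t \<longleftrightarrow> t > 0 \<and> (\<forall>l>0. min_disp rho l = t * \<bar>ln l\<bar>)"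

end

theory Submission
  imports Defs
begin

(* Conjugation by the hyperbolic elements, g(\<lambda>,0) g(1,b) = g(1,\<lambda>\<^sup>2 b) g(\<lambda>,0), gives
   \<rho>(g(\<lambda>,0)) T_b = T_(\<lambda>\<^sup>2 b) \<rho>(g(\<lambda>,0)).  As ell(\<rho>) = 2, the eigenvalue of \<rho>(g(\<lambda>,0)) on \<eta>1
   has modulus \<lambda>^(\<plusminus>2), so on b > 0 the coefficient K is homogeneous of degree \<plusminus>2 and the norm
   of c in the positive definite space (E, -B) of degree \<plusminus>1.  The cocycle identity
   c(b1 + b2) = c(b1) + (E-component of T_b1 c(b2)), whose last term has the norm of c(b2), makes the
   triangle inequality in E rule out degree -1 and, through its equality case, forces c to be
   linear.  Then Im K is additive, and being homogeneous of degree \<plusminus>2 \<noteq> 1 it vanishes.  If c were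
   zero, K would vanish too, every T_b would fix \<eta>2, and by the Bruhat decomposition of SU(1,1) the
   whole image of \<rho> would preserve {[\<eta>1], [\<eta>2]}, contradicting non-elementarity. *)

lemma vadd_apply: "vadd v w n = v n + w n"
  by (simp add: vadd_def)

lemma vscale_apply: "vscale a v n = a * v n"
  by (simp add: vscale_def)

lemma vzero_apply: "vzero n = 0"
  by (simp add: vzero_def)

lemma vscale_vscale: "vscale a (vscale b v) = vscale (a * b) v"
  by (simp add: vscale_def mult.assoc)

lemma vscale_one [simp]: "vscale 1 v = v"
  by (simp add: vscale_def)

lemma vscale_zero [simp]: "vscale 0 v = vzero"
  by (simp add: vscale_def vzero_def)

lemma vscale_vzero [simp]: "vscale a vzero = vzero"
  by (simp add: vscale_def vzero_def)

lemma vadd_vzero [simp]: "vadd v vzero = v" "vadd vzero v = v"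
  by (simp_all add: vadd_def vzero_def)

lemma vscale_cancel_right:
  assumes "v \<noteq> vzero" "vscale a v = vscale b v"
  shows "a = b"
proof -
  obtain n where "v n \<noteq> 0"
    using assms(1) by (auto simp: fun_eq_iff vzero_def)
  moreover have "a * v n = b * v n"
    using assms(2) by (metis vscale_apply)
  ultimately show ?thesis
    by simp
qed

lemma same_line_vscale: "same_line v (vscale a v)"
  unfolding same_line_def by blast

lemma same_line_refl: "same_line v v"
  using same_line_vscale[of v 1] by simp

lemma same_line_trans: "same_line u v \<Longrightarrow> same_line v w \<Longrightarrow> same_line u w"
  unfolding same_line_def by (metis vscale_vscale)

lemma l2_vadd [intro]:
  assumes "v \<in> l2" "w \<in> l2"
  shows "vadd v w \<in> l2"
proof -
  have "(cmod (v n + w n))\<^sup>2 \<le> 2 * (cmod (v n))\<^sup>2 + 2 * (cmod (w n))\<^sup>2" for n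
  proof -
    have "(cmod (v n + w n))\<^sup>2 \<le> (cmod (v n) + cmod (w n))\<^sup>2"
      by (simp add: power_mono norm_triangle_ineq)
    also have "\<dots> \<le> 2 * (cmod (v n))\<^sup>2 + 2 * (cmod (w n))\<^sup>2"
      using zero_le_power2[of "cmod (v n) - cmod (w n)"]
      unfolding power2_sum power2_diff by linarith
    finally show ?thesis .
  qed
  moreover have "summable (\<lambda>n. 2 * (cmod (v n))\<^sup>2 + 2 * (cmod (w n))\<^sup>2)"
    using assms by (auto simp: l2_def intro!: summable_add summable_mult)
  ultimately show ?thesis
    unfolding l2_def vadd_apply by (auto intro: summable_comparison_test')
qed

lemma l2_vscale [intro]:
  assumes "v \<in> l2"
  shows "vscale a v \<in> l2"
proof -
  have "(cmod (vscale a v n))\<^sup>2 = (cmod a)\<^sup>2 * (cmod (v n))\<^sup>2" for n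
    by (simp add: vscale_apply norm_mult power_mult_distrib)
  then show ?thesis
    using assms unfolding l2_def by (simp add: summable_mult)
qed

lemma l2_vzero [intro, simp]: "vzero \<in> l2"
  by (simp add: l2_def vzero_def)

lemma summable_l2_inner:
  assumes "v \<in> l2" "w \<in> l2"
  shows "summable (\<lambda>n. v n * cnj (w n))"
proof -
  have bound: "norm (v n * cnj (w n)) \<le> (cmod (v n))\<^sup>2 + (cmod (w n))\<^sup>2" for n
  proof -
    have "norm (v n * cnj (w n)) = cmod (v n) * cmod (w n)"
      by (simp add: norm_mult)
    also have "\<dots> \<le> (cmod (v n))\<^sup>2 + (cmod (w n))\<^sup>2"
      using zero_le_power2[of "cmod (v n) - cmod (w n)"]
        mult_nonneg_nonneg[OF norm_ge_zero norm_ge_zero, of "v n" "w n"]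
      unfolding power2_diff by linarith
    finally show ?thesis .
  qed
  have "summable (\<lambda>n. (cmod (v n))\<^sup>2 + (cmod (w n))\<^sup>2)"
    using assms by (auto simp: l2_def intro!: summable_add)
  then show ?thesis
    by (rule summable_comparison_test'[of _ 0]) (rule bound)
qed

lemma summable_l2_inner_Suc:
  "v \<in> l2 \<Longrightarrow> w \<in> l2 \<Longrightarrow> summable (\<lambda>n. v (Suc n) * cnj (w (Suc n)))"
  using summable_l2_inner by (subst summable_Suc_iff)

lemma summable_l2_Suc: "v \<in> l2 \<Longrightarrow> summable (\<lambda>n. (cmod (v (Suc n)))\<^sup>2)"
  unfolding l2_def by (subst summable_Suc_iff) simp

lemma Bf_vadd_left:
  assumes "u \<in> l2" "v \<in> l2" "w \<in> l2"
  shows "Bf (vadd u v) w = Bf u w + Bf v w"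
  using suminf_add[OF summable_l2_inner_Suc[OF assms(1,3)] summable_l2_inner_Suc[OF assms(2,3)],
      symmetric]
  by (simp add: Bf_def vadd_apply distrib_right)

lemma Bf_vscale_left:
  assumes "u \<in> l2" "w \<in> l2"
  shows "Bf (vscale a u) w = a * Bf u w"
  using suminf_mult[OF summable_l2_inner_Suc[OF assms], of a]
  by (simp add: Bf_def vscale_apply algebra_simps)

lemma cnj_Bf:
  assumes "v \<in> l2" "w \<in> l2"
  shows "cnj (Bf v w) = Bf w v"
proof -
  have "(\<lambda>n. v (Suc n) * cnj (w (Suc n))) sums (\<Sum>n. v (Suc n) * cnj (w (Suc n)))"
    using summable_l2_inner_Suc[OF assms] by (simp add: summable_sums)
  then have "(\<lambda>n. cnj (v (Suc n) * cnj (w (Suc n)))) sums cnj (\<Sum>n. v (Suc n) * cnj (w (Suc n)))"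
    by (rule iffD2[OF sums_cnj])
  then have "(\<lambda>n. w (Suc n) * cnj (v (Suc n))) sums cnj (\<Sum>n. v (Suc n) * cnj (w (Suc n)))"
    by (simp add: mult.commute)
  then have "(\<Sum>n. w (Suc n) * cnj (v (Suc n))) = cnj (\<Sum>n. v (Suc n) * cnj (w (Suc n)))"
    by (simp add: sums_iff)
  then show ?thesis
    by (simp add: Bf_def mult.commute)
qed

lemma Bf_vadd_right:
  assumes "u \<in> l2" "v \<in> l2" "w \<in> l2"
  shows "Bf w (vadd u v) = Bf w u + Bf w v"
proof -
  have "Bf w (vadd u v) = cnj (Bf (vadd u v) w)"
    using assms by (simp add: cnj_Bf l2_vadd)
  then show ?thesis
    using assms by (simp add: Bf_vadd_left cnj_Bf)
qed

lemma Bf_vscale_right: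
  assumes "u \<in> l2" "w \<in> l2"
  shows "Bf w (vscale a u) = cnj a * Bf w u"
proof -
  have "Bf w (vscale a u) = cnj (Bf (vscale a u) w)"
    using assms by (simp add: cnj_Bf l2_vscale)
  then show ?thesis
    using assms by (simp add: Bf_vscale_left cnj_Bf)
qed

lemma Bf_vzero [simp]: "Bf vzero w = 0" "Bf w vzero = 0"
  by (simp_all add: Bf_def vzero_apply)

lemma Bf_self_real:
  assumes "v \<in> l2"
  shows "Bf v v = of_real (Re (Bf v v))"
proof -
  have "Im (cnj (Bf v v)) = Im (Bf v v)"
    using cnj_Bf[OF assms assms] by simp
  then have "Im (Bf v v) = 0"
    by simp
  then show ?thesis
    by (simp add: complex_eq_iff)
qed

lemma Re_Bf_self:
  assumes "v \<in> l2"
  shows "Re (Bf v v) = (cmod (v 0))\<^sup>2 - (\<Sum>n. (cmod (v (Suc n)))\<^sup>2)"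
proof -
  have sq: "v n * cnj (v n) = of_real ((cmod (v n))\<^sup>2)" for n
    using complex_norm_square[of "v n"] by simp
  have "(\<Sum>n. v (Suc n) * cnj (v (Suc n))) = of_real (\<Sum>n. (cmod (v (Suc n)))\<^sup>2)"
    by (simp add: sq suminf_of_real[OF summable_l2_Suc[OF assms]])
  then show ?thesis
    by (simp add: Bf_def sq)
qed

lemma Re_Bf_self_le:
  assumes "v \<in> l2"
  shows "Re (Bf v v) \<le> (cmod (v 0))\<^sup>2"
proof -
  have "0 \<le> (\<Sum>n. (cmod (v (Suc n)))\<^sup>2)"
    by (rule suminf_nonneg[OF summable_l2_Suc[OF assms]]) simp
  then show ?thesis
    using Re_Bf_self[OF assms] by simp
qed

lemma vzero_if_Re_Bf_self_nonneg:
  assumes "v \<in> l2" "v 0 = 0" "Re (Bf v v) \<ge> 0"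
  shows "v = vzero"
proof -
  note sm = summable_l2_Suc[OF assms(1)]
  have "(\<Sum>n. (cmod (v (Suc n)))\<^sup>2) \<le> 0"
    using Re_Bf_self[OF assms(1)] assms(2,3) by simp
  then have "(\<Sum>n. (cmod (v (Suc n)))\<^sup>2) = 0"
    using suminf_nonneg[OF sm] by force
  then have "v (Suc n) = 0" for n
    using suminf_eq_zero_iff[OF sm] by simp
  then have "v n = 0" for n
    using assms(2) by (cases n) simp_all
  then show ?thesis
    by (simp add: fun_eq_iff vzero_def)
qed

lemma UB_bij: "T \<in> UB \<Longrightarrow> bij_betw T l2 l2"
  unfolding UB_def by blast

lemma UB_l2: "T \<in> UB \<Longrightarrow> v \<in> l2 \<Longrightarrow> T v \<in> l2"
  by (rule bij_betw_apply[OF UB_bij])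

lemma UB_vadd: "T \<in> UB \<Longrightarrow> v \<in> l2 \<Longrightarrow> w \<in> l2 \<Longrightarrow> T (vadd v w) = vadd (T v) (T w)"
  unfolding UB_def by blast

lemma UB_vscale: "T \<in> UB \<Longrightarrow> v \<in> l2 \<Longrightarrow> T (vscale a v) = vscale a (T v)"
  unfolding UB_def by blast

lemma UB_Bf: "T \<in> UB \<Longrightarrow> v \<in> l2 \<Longrightarrow> w \<in> l2 \<Longrightarrow> Bf (T v) (T w) = Bf v w"
  unfolding UB_def by blast

lemma UB_inj: "T \<in> UB \<Longrightarrow> v \<in> l2 \<Longrightarrow> w \<in> l2 \<Longrightarrow> T v = T w \<Longrightarrow> v = w"
  using bij_betw_imp_inj_on[OF UB_bij] by (rule inj_onD)

lemma UB_vzero: "T \<in> UB \<Longrightarrow> T vzero = vzero"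
  using UB_vscale[of T vzero 0] by simp

lemma UB_nonzero: "T \<in> UB \<Longrightarrow> v \<in> l2 \<Longrightarrow> v \<noteq> vzero \<Longrightarrow> T v \<noteq> vzero"
  using UB_inj[of T v vzero] UB_vzero[of T] by force

lemma UB_isotropic: "T \<in> UB \<Longrightarrow> isotropic v \<Longrightarrow> isotropic (T v)"
  unfolding isotropic_def using UB_l2[of T v] UB_Bf[of T v v] UB_nonzero[of T v] by simp

lemma same_line_UB:
  assumes "T \<in> UB" "v \<in> l2" "same_line v w"
  shows "same_line (T v) (T w)"
proof -
  obtain a where "w = vscale a v"
    using assms(3) unfolding same_line_def by blast
  then have "T w = vscale a (T v)"
    using assms(1,2) UB_vscale by simp
  then show ?thesis
    unfolding same_line_def by blast
qed

lemma proj_eq_sym: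
  assumes "proj_eq X Y"
  shows "proj_eq Y X"
proof -
  obtain u where u: "cmod u = 1" "\<And>v. v \<in> l2 \<Longrightarrow> X v = vscale u (Y v)"
    using assms unfolding proj_eq_def by blast
  then have "\<forall>v\<in>l2. Y v = vscale (1 / u) (X v)" "cmod (1 / u) = 1"
    by (auto simp: vscale_vscale norm_divide)
  then show ?thesis
    unfolding proj_eq_def by blast
qed

lemma proj_eq_trans [trans]:
  assumes "proj_eq X Y" "proj_eq Y Z"
  shows "proj_eq X Z"
proof -
  obtain u where u: "cmod u = 1" "\<And>v. v \<in> l2 \<Longrightarrow> X v = vscale u (Y v)"
    using assms(1) unfolding proj_eq_def by blast
  obtain w where w: "cmod w = 1" "\<And>v. v \<in> l2 \<Longrightarrow> Y v = vscale w (Z v)"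
    using assms(2) unfolding proj_eq_def by blast
  have "\<forall>v\<in>l2. X v = vscale (u * w) (Z v)" "cmod (u * w) = 1"
    using u w by (simp_all add: vscale_vscale norm_mult)
  then show ?thesis
    unfolding proj_eq_def by blast
qed

lemma proj_eq_comp_left:
  assumes "Z \<in> UB" "\<And>v. v \<in> l2 \<Longrightarrow> Y v \<in> l2" "proj_eq X Y"
  shows "proj_eq (Z \<circ> X) (Z \<circ> Y)"
proof -
  obtain u where u: "cmod u = 1" "\<And>v. v \<in> l2 \<Longrightarrow> X v = vscale u (Y v)"
    using assms(3) unfolding proj_eq_def by blast
  then have "\<forall>v\<in>l2. Z (X v) = vscale u (Z (Y v))"
    using assms(1,2) UB_vscale by simp
  then show ?thesis
    using u(1) unfolding proj_eq_def by auto
qed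

lemma proj_eq_comp_right:
  "(\<And>v. v \<in> l2 \<Longrightarrow> Z v \<in> l2) \<Longrightarrow> proj_eq X Y \<Longrightarrow> proj_eq (X \<circ> Z) (Y \<circ> Z)"
  unfolding proj_eq_def by auto

lemma proj_eq_eqI:
  assumes "proj_eq X Y" "w \<in> l2" "X w = Y w" "Y w \<noteq> vzero" "v \<in> l2"
  shows "X v = Y v"
proof -
  obtain u where u: "cmod u = 1" "\<And>v. v \<in> l2 \<Longrightarrow> X v = vscale u (Y v)"
    using assms(1) unfolding proj_eq_def by blast
  have "vscale u (Y w) = vscale 1 (Y w)"
    using u(2)[OF assms(2)] assms(3) by simp
  then have "u = 1"
    using vscale_cancel_right[OF assms(4)] by blast
  then show ?thesis
    using u(2)[OF assms(5)] by simp
qed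

lemma same_line_proj_eq:
  assumes "proj_eq X Y" "v \<in> l2" "same_line w (Y v)"
  shows "same_line w (X v)"
proof -
  obtain u where "\<And>v. v \<in> l2 \<Longrightarrow> X v = vscale u (Y v)"
    using assms(1) unfolding proj_eq_def by blast
  moreover obtain a where "Y v = vscale a w"
    using assms(3) unfolding same_line_def by blast
  ultimately have "X v = vscale (u * a) w"
    using assms(2) by (simp add: vscale_vscale)
  then show ?thesis
    unfolding same_line_def by blast
qed

section \<open>The group \<open>SU(1,1)\<close>\<close>

lemma mat2_eq_iff:
  "(A::complex^2^2) = B \<longleftrightarrow> A$1$1 = B$1$1 \<and> A$1$2 = B$1$2 \<and> A$2$1 = B$2$1 \<and> A$2$2 = B$2$2"
  by (auto simp: vec_eq_iff forall_2)

lemma matrix_mult_2: "(A::complex^2^2) ** B = (\<chi> i j. A$i$1 * B$1$j + A$i$2 * B$2$j)"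
  by (simp add: matrix_matrix_mult_def sum_2)

lemma matrix_vector_mult_2: "(A::complex^2^2) *v z = (\<chi> i. A$i$1 * z$1 + A$i$2 * z$2)"
  by (simp add: matrix_vector_mult_def sum_2)

lemma uminus_mat_1_mult: "(- mat 1) ** (M::complex^2^2) = - M"
  by (simp add: mat2_eq_iff matrix_mult_2 mat_def)

definition su_mat :: "complex \<Rightarrow> complex \<Rightarrow> complex^2^2" where
  "su_mat a b = (\<chi> i j. if i = 1 \<and> j = 1 then a else if i = 1 \<and> j = 2 then b
                       else if i = 2 \<and> j = 1 then cnj b else cnj a)"

lemma su_mat_nth [simp]:
  "su_mat a b $ 1 $ 1 = a" "su_mat a b $ 1 $ 2 = b"
  "su_mat a b $ 2 $ 1 = cnj b" "su_mat a b $ 2 $ 2 = cnj a"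
  by (simp_all add: su_mat_def)

lemma su_mat_eq_iff: "su_mat a b = su_mat c d \<longleftrightarrow> a = c \<and> b = d"
  by (auto simp: mat2_eq_iff)

lemma su_mat_mult: "su_mat a b ** su_mat c d = su_mat (a * c + b * cnj d) (a * d + b * cnj c)"
  by (simp add: mat2_eq_iff matrix_mult_2 algebra_simps)

lemma su_mat_in_SU11:
  assumes "(cmod a)\<^sup>2 - (cmod b)\<^sup>2 = 1"
  shows "su_mat a b \<in> SU11"
proof -
  have "a * cnj a - b * cnj b = 1"
    using assms by (metis complex_norm_square of_real_1 of_real_diff)
  moreover have "B2 (su_mat a b *v z) (su_mat a b *v w)
      = (a * cnj a - b * cnj b) * (z$1 * cnj (w$1) - z$2 * cnj (w$2))" for z w
    by (simp add: B2_def matrix_vector_mult_2 algebra_simps)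
  ultimately show ?thesis
    by (simp add: SU11_def B2_def det_2 mult.commute)
qed

lemma SU11_imp_su_mat:
  assumes "g \<in> SU11"
  obtains a b where "g = su_mat a b" "(cmod a)\<^sup>2 - (cmod b)\<^sup>2 = 1"
proof -
  define p q r s where "p = g$1$1" "q = g$1$2" "r = g$2$1" "s = g$2$2"
  have det: "p * s - q * r = 1"
    using assms by (simp add: SU11_def det_2 p_q_r_s_def)
  define u v :: "complex^2" where "u = (\<chi> i. if i = 1 then 1 else 0)" "v = (\<chi> i. if i = 2 then 1 else 0)"
  have "B2 (g *v x) (g *v y) = B2 x y" for x y
    using assms by (simp add: SU11_def)
  from this[of u u] this[of v v] this[of v u]
  have pr: "p * cnj p - r * cnj r = 1" and qs: "q * cnj q - s * cnj s = -1"
    and qp: "cnj p * q = cnj r * s"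
    by (simp_all add: B2_def matrix_vector_mult_2 p_q_r_s_def u_v_def algebra_simps)
  have "s = s * (p * cnj p - r * cnj r)"
    using pr by simp
  also have "\<dots> = cnj p * (p * s - q * r)"
    using qp by (simp add: algebra_simps)
  finally have sp: "s = cnj p"
    using det by simp
  have "cnj q = cnj q * (p * s - q * r)"
    using det by simp
  also have "\<dots> = - r * (q * cnj q - s * cnj s)"
    using arg_cong[OF qp, of cnj] sp by (simp add: algebra_simps)
  finally have rq: "r = cnj q"
    using qs by simp
  have "g = su_mat p q"
    by (simp add: mat2_eq_iff p_q_r_s_def[symmetric] sp rq)
  moreover have "of_real ((cmod p)\<^sup>2 - (cmod q)\<^sup>2) = (1::complex)"
    using pr rq by (simp only: of_real_diff complex_norm_square) (simp add: mult.commute)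
  ultimately show ?thesis
    using that of_real_eq_1_iff by blast
qed

text \<open>\<open>xi_mat a b c d\<close> is the matrix \<open>[[a, \<i> b], [\<i> c, d]]\<close> in the basis \<open>(\<xi>1, \<xi>2)\<close>
  (see \<open>gmat_xi_mat\<close>). Sending it to \<open>[[a, b], [-c, d]]\<close> identifies \<open>SU(1,1)\<close> with
  \<open>SL(2,\<real>)\<close>, which reduces the Bruhat decomposition below to real \<open>2 \<times> 2\<close> algebra.\<close>

definition xi_mat :: "real \<Rightarrow> real \<Rightarrow> real \<Rightarrow> real \<Rightarrow> complex^2^2" where
  "xi_mat a b c d = su_mat (Complex ((a + d) / 2) ((b + c) / 2)) (Complex ((a - d) / 2) ((c - b) / 2))"

lemma Pxi_Pxi: "Pxi ** Pxi = mat 1"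
proof -
  have "complex_of_real (sqrt 2) * complex_of_real (sqrt 2) = 2"
    by (subst of_real_mult[symmetric]) simp
  then show ?thesis
    by (simp add: mat2_eq_iff matrix_mult_2 Pxi_def mat_def)
qed

lemma matrix_inv_Pxi: "matrix_inv Pxi = Pxi"
proof -
  have inv: "Pxi ** matrix_inv Pxi = mat 1 \<and> matrix_inv Pxi ** Pxi = mat 1"
    unfolding matrix_inv_def by (rule someI[of _ Pxi]) (simp add: Pxi_Pxi)
  have "matrix_inv Pxi = matrix_inv Pxi ** (Pxi ** Pxi)"
    by (simp add: Pxi_Pxi)
  also have "\<dots> = Pxi"
    by (simp add: matrix_mul_assoc inv)
  finally show ?thesis .
qed

lemma gmat_xi_mat: "gmat l b = xi_mat l b 0 (1 / l)"
proof -
  have "complex_of_real (sqrt 2) * complex_of_real (sqrt 2) = 2"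
    by (subst of_real_mult[symmetric]) simp
  then show ?thesis
    unfolding gmat_def matrix_inv_Pxi
    by (simp add: xi_mat_def mat2_eq_iff matrix_mult_2 Pxi_def algebra_simps complex_eq_iff)
qed

lemma xi_mat_eq_iff: "xi_mat a b c d = xi_mat a' b' c' d' \<longleftrightarrow> a = a' \<and> b = b' \<and> c = c' \<and> d = d'"
  by (auto simp: xi_mat_def su_mat_eq_iff)

lemma xi_mat_mult:
  "xi_mat a b c d ** xi_mat a' b' c' d'
     = xi_mat (a * a' - b * c') (a * b' + b * d') (c * a' + d * c') (d * d' - c * b')"
  by (simp add: xi_mat_def su_mat_mult su_mat_eq_iff complex_eq_iff field_simps)

lemma uminus_xi_mat: "- xi_mat a b c d = xi_mat (- a) (- b) (- c) (- d)"
  by (simp add: xi_mat_def mat2_eq_iff complex_eq_iff field_simps)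

lemma xi_mat_in_SU11:
  assumes "a * d + b * c = 1"
  shows "xi_mat a b c d \<in> SU11"
proof -
  have "(cmod (Complex ((a + d) / 2) ((b + c) / 2)))\<^sup>2
      - (cmod (Complex ((a - d) / 2) ((c - b) / 2)))\<^sup>2 = a * d + b * c"
    unfolding cmod_power2 by (simp add: power2_eq_square field_simps)
  then show ?thesis
    using assms unfolding xi_mat_def by (simp add: su_mat_in_SU11)
qed

lemma SU11_imp_xi_mat:
  assumes "g \<in> SU11"
  obtains a b c d where "a * d + b * c = 1" "g = xi_mat a b c d"
proof -
  obtain p q where g: "g = su_mat p q" and n: "(cmod p)\<^sup>2 - (cmod q)\<^sup>2 = 1"
    using SU11_imp_su_mat[OF assms] .
  show ?thesis
  proof
    show "g = xi_mat (Re p + Re q) (Im p - Im q) (Im p + Im q) (Re p - Re q)"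
      by (simp add: g xi_mat_def su_mat_eq_iff complex_eq_iff)
    show "(Re p + Re q) * (Re p - Re q) + (Im p - Im q) * (Im p + Im q) = 1"
      using n unfolding cmod_power2 by (simp add: power2_eq_square algebra_simps)
  qed
qed

definition weyl :: "complex^2^2" where
  "weyl = xi_mat 0 1 1 0"

lemma weyl_in_SU11: "weyl \<in> SU11"
  by (simp add: weyl_def xi_mat_in_SU11)

lemma gmat_in_SU11: "l \<noteq> 0 \<Longrightarrow> gmat l b \<in> SU11"
  by (simp add: gmat_xi_mat xi_mat_in_SU11)

lemma uminus_mat_1_in_SU11: "- mat 1 \<in> SU11"
proof -
  have "- mat 1 = xi_mat (- 1) 0 0 (- 1)"
    by (simp add: xi_mat_def mat2_eq_iff mat_def complex_eq_iff)
  then show ?thesis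
    by (simp add: xi_mat_in_SU11)
qed

lemma SU11_mult: "g \<in> SU11 \<Longrightarrow> h \<in> SU11 \<Longrightarrow> g ** h \<in> SU11"
  by (simp add: SU11_def det_mul matrix_vector_mul_assoc[symmetric])

lemma gmat_mult: "l \<noteq> 0 \<Longrightarrow> m \<noteq> 0 \<Longrightarrow> gmat l b ** gmat m c = gmat (l * m) (l * c + b / m)"
  by (simp add: gmat_xi_mat xi_mat_mult)

lemma weyl_gmat: "l \<noteq> 0 \<Longrightarrow> weyl ** gmat l 0 = gmat (1 / l) 0 ** weyl"
  by (simp add: weyl_def gmat_xi_mat xi_mat_mult)

lemma gmat_weyl_gmat:
  "l \<noteq> 0 \<Longrightarrow> gmat 1 x ** weyl ** gmat l y = xi_mat (- x * l) (1 / l - x * y) l (- y)"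
  by (simp add: weyl_def gmat_xi_mat xi_mat_mult)

lemma SU11_bruhat:
  assumes "g \<in> SU11"
  shows "(\<exists>l x. l > 0 \<and> (g = gmat l x \<or> g = - gmat l x)) \<or>
         (\<exists>x l y. l > 0 \<and> (g = gmat 1 x ** weyl ** gmat l y \<or> g = - (gmat 1 x ** weyl ** gmat l y)))"
proof -
  obtain a b c d where det: "a * d + b * c = 1" and g: "g = xi_mat a b c d"
    using SU11_imp_xi_mat[OF assms] .
  show ?thesis
  proof (cases "c = 0")
    case True
    then have "a \<noteq> 0"
      using det by auto
    then have "d = 1 / a"
      using det \<open>c = 0\<close> by (simp add: field_simps mult.commute)
    then have "g = gmat a b" "g = - gmat (- a) (- b)"
      using True by (simp_all add: g gmat_xi_mat uminus_xi_mat)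
    moreover have "a > 0 \<or> - a > 0"
      using \<open>a \<noteq> 0\<close> by linarith
    ultimately show ?thesis
      by blast
  next
    case False
    have "b = (1 - a * d) / c"
      using det False by (simp add: field_simps)
    then have "g = gmat 1 (- a / c) ** weyl ** gmat c (- d)"
      "g = - (gmat 1 (- a / c) ** weyl ** gmat (- c) d)"
      using False by (simp_all add: g gmat_weyl_gmat uminus_xi_mat xi_mat_eq_iff field_simps)
    moreover have "c > 0 \<or> - c > 0"
      using False by linarith
    ultimately show ?thesis
      by blast
  qed
qed

lemma mult_cnj_eq_norm_power2: "z * cnj z = (of_real (cmod z))\<^sup>2"
  using complex_norm_square[of z] by simp

lemma cmod_add_cnj_div_cnj_ge:
  fixes \<alpha> z :: complex
  assumes "\<alpha> \<noteq> 0"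
  shows "(cmod \<alpha> + 1 / cmod \<alpha>) * Re z \<le> cmod (\<alpha> * z + cnj z / cnj \<alpha>)"
proof -
  define r where "r = cmod \<alpha>"
  have "r > 0"
    using assms by (simp add: r_def)
  moreover have "\<alpha> * cnj \<alpha> = of_real (r\<^sup>2)"
    unfolding r_def by (rule complex_norm_square[symmetric])
  ultimately have r: "r > 0" "\<alpha> * cnj \<alpha> = of_real (r\<^sup>2)"
    by simp_all
  then have "\<alpha> * z + cnj z / cnj \<alpha> = (\<alpha> / of_real r) * (of_real r * z + cnj z / of_real r)"
    using assms by (simp add: field_simps power2_eq_square)
  then have "cmod (\<alpha> * z + cnj z / cnj \<alpha>) = cmod (of_real r * z + cnj z / of_real r)"
    using r(1) by (simp add: norm_mult norm_divide r_def)
  also have "\<dots> \<ge> Re (of_real r * z + cnj z / of_real r)"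
    by (rule complex_Re_le_cmod)
  finally show ?thesis
    using r(1) by (simp add: r_def field_simps)
qed

lemma additive_abs_eq_linear:
  fixes F :: "real \<Rightarrow> real"
  assumes add: "\<And>u v. F (u + v) = F u + F v" and abs: "\<And>u. \<bar>F u\<bar> = k * \<bar>u\<bar>"
  shows "(\<forall>u. F u = k * u) \<or> (\<forall>u. F u = - k * u)"
proof -
  have "k \<ge> 0"
    using abs[of 1] abs_ge_zero[of "F 1"] by simp
  then have sign: "F u = k * u \<or> F u = - k * u" for u
    using abs[of u] abs_eq_iff[of "F u" "k * u"] by (simp add: abs_mult)
  have opposite: "k * u = 0" if "F u = k * u" "F v = - k * v" "v \<noteq> 0" for u v
  proof -
    have "\<bar>F (u + v)\<bar> = \<bar>k * (u + v)\<bar>"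
      using abs[of "u + v"] \<open>k \<ge> 0\<close> by (simp add: abs_mult)
    moreover have "F (u + v) = k * (u - v)"
      using add[of u v] that(1,2) by (simp add: algebra_simps)
    ultimately have "(k * (u - v))\<^sup>2 = (k * (u + v))\<^sup>2"
      by (metis power2_abs)
    moreover have "(k * (u + v))\<^sup>2 - (k * (u - v))\<^sup>2 = 4 * (k * k * (u * v))"
      by (simp add: power2_eq_square algebra_simps)
    ultimately have "k * k * (u * v) = 0"
      by simp
    then show ?thesis
      using \<open>v \<noteq> 0\<close> by simp
  qed
  consider "F 1 = k" | "F 1 = - k"
    using sign[of 1] by auto
  then show ?thesis
  proof cases
    case 1
    then have "F u = k * u" for u
      using sign[of u] opposite[of 1 u] by (cases "u = 0") auto
    then show ?thesis
      by blast
  next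
    case 2
    then have "F u = - k * u" for u
      using sign[of u] opposite[of u 1] by auto
    then show ?thesis
      by blast
  qed
qed

lemma multiplicative_abs_ln_eq_powr:
  fixes f :: "real \<Rightarrow> real"
  assumes pos: "\<And>l. l > 0 \<Longrightarrow> f l > 0"
    and mult: "\<And>l m. l > 0 \<Longrightarrow> m > 0 \<Longrightarrow> f (l * m) = f l * f m"
    and abs_ln: "\<And>l. l > 0 \<Longrightarrow> \<bar>ln (f l)\<bar> = k * \<bar>ln l\<bar>"
  obtains \<epsilon> :: real where "\<epsilon> = 1 \<or> \<epsilon> = -1" "\<And>l. l > 0 \<Longrightarrow> f l = l powr (\<epsilon> * k)"
proof -
  define F where "F u = ln (f (exp u))" for u
  have "(\<forall>u. F u = k * u) \<or> (\<forall>u. F u = - k * u)"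
  proof (rule additive_abs_eq_linear)
    show "F (u + v) = F u + F v" for u v
      using pos[OF exp_gt_zero, of u] pos[OF exp_gt_zero, of v]
      by (simp add: F_def exp_add mult ln_mult)
    show "\<bar>F u\<bar> = k * \<bar>u\<bar>" for u
      by (simp add: F_def abs_ln)
  qed
  then obtain \<epsilon> :: real where \<epsilon>: "\<epsilon> = 1 \<or> \<epsilon> = -1" "\<And>u. F u = \<epsilon> * k * u"
  proof
    assume "\<forall>u. F u = k * u"
    then show ?thesis
      by (intro that[of 1]) simp_all
  next
    assume "\<forall>u. F u = - k * u"
    then show ?thesis
      by (intro that[of "-1"]) simp_all
  qed
  have "f l = l powr (\<epsilon> * k)" if "l > 0" for l
  proof -
    have "f l = exp (F (ln l))"
      using that pos[OF that] by (simp add: F_def)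
    then show ?thesis
      using that by (simp add: \<epsilon>(2) powr_def mult.commute)
  qed
  then show ?thesis
    using that \<epsilon>(1) by blast
qed

section \<open>Null frames and the negative definite complement \<open>E\<close>\<close>

locale null_frame =
  fixes \<eta>1 \<eta>2 :: vec
  assumes isotropic_\<eta>1: "isotropic \<eta>1"
    and isotropic_\<eta>2: "isotropic \<eta>2"
    and Bf_\<eta>1_\<eta>2: "Bf \<eta>1 \<eta>2 = 1"
begin

lemma l2_\<eta> [simp]: "\<eta>1 \<in> l2" "\<eta>2 \<in> l2"
  using isotropic_\<eta>1 isotropic_\<eta>2 by (simp_all add: isotropic_def)

lemma \<eta>_nonzero: "\<eta>1 \<noteq> vzero" "\<eta>2 \<noteq> vzero"
  using isotropic_\<eta>1 isotropic_\<eta>2 by (simp_all add: isotropic_def)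

lemma Bf_\<eta> [simp]: "Bf \<eta>1 \<eta>1 = 0" "Bf \<eta>2 \<eta>2 = 0" "Bf \<eta>1 \<eta>2 = 1" "Bf \<eta>2 \<eta>1 = 1"
  using isotropic_\<eta>1 isotropic_\<eta>2 Bf_\<eta>1_\<eta>2 cnj_Bf[of \<eta>1 \<eta>2]
  by (simp_all add: isotropic_def)

lemma \<eta>_not_same_line: "\<not> same_line \<eta>1 \<eta>2"
proof
  assume "same_line \<eta>1 \<eta>2"
  then obtain \<mu> where "\<eta>2 = vscale \<mu> \<eta>1"
    unfolding same_line_def by blast
  then have "Bf \<eta>1 \<eta>2 = 0"
    using Bf_vscale_right[of \<eta>1 \<eta>1 \<mu>] by simp
  then show False
    by simp
qed

definition E :: "vec set" where
  "E = {e \<in> l2. Bf e \<eta>1 = 0 \<and> Bf e \<eta>2 = 0}"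

text \<open>Membership in \<open>E\<close> is handled through \<open>E_I\<close> and \<open>E_l2\<close> only: unfolding \<open>E_def\<close>
  next to the simp rule \<open>Bf_E\<close> makes the simplifier loop.\<close>

lemma E_I: "e \<in> l2 \<Longrightarrow> Bf e \<eta>1 = 0 \<Longrightarrow> Bf e \<eta>2 = 0 \<Longrightarrow> e \<in> E"
  by (simp add: E_def)

lemma E_l2: "e \<in> E \<Longrightarrow> e \<in> l2"
  by (simp add: E_def)

lemma Bf_E [simp]:
  assumes "e \<in> E"
  shows "Bf e \<eta>1 = 0" "Bf e \<eta>2 = 0" "Bf \<eta>1 e = 0" "Bf \<eta>2 e = 0"
proof -
  have e: "e \<in> l2" "Bf e \<eta>1 = 0" "Bf e \<eta>2 = 0"
    using assms by (simp_all add: E_def)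
  then show "Bf e \<eta>1 = 0" "Bf e \<eta>2 = 0"
    by simp_all
  show "Bf \<eta>1 e = 0" "Bf \<eta>2 e = 0"
    using cnj_Bf[OF e(1), of \<eta>1] cnj_Bf[OF e(1), of \<eta>2] e(2,3) by simp_all
qed

lemma E_vadd [intro]: "e \<in> E \<Longrightarrow> f \<in> E \<Longrightarrow> vadd e f \<in> E"
  by (rule E_I) (simp_all add: E_l2 Bf_vadd_left l2_vadd)

lemma E_vscale [intro]: "e \<in> E \<Longrightarrow> vscale a e \<in> E"
  by (rule E_I) (simp_all add: E_l2 Bf_vscale_left l2_vscale)

lemma E_vzero [intro, simp]: "vzero \<in> E"
  by (rule E_I) simp_all

definition frame_comb :: "complex \<Rightarrow> complex \<Rightarrow> vec \<Rightarrow> vec" where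
  "frame_comb a b e = vadd (vadd (vscale a \<eta>1) (vscale b \<eta>2)) e"

lemma l2_frame_comb [intro]: "e \<in> l2 \<Longrightarrow> frame_comb a b e \<in> l2"
  by (simp add: frame_comb_def l2_vadd l2_vscale)

lemma Bf_frame_comb_left:
  assumes "e \<in> l2" "w \<in> l2"
  shows "Bf (frame_comb a b e) w = a * Bf \<eta>1 w + b * Bf \<eta>2 w + Bf e w"
  using assms by (simp add: frame_comb_def Bf_vadd_left Bf_vscale_left l2_vadd l2_vscale)

lemma Bf_frame_comb_right:
  assumes "e \<in> l2" "w \<in> l2"
  shows "Bf w (frame_comb a b e) = cnj a * Bf w \<eta>1 + cnj b * Bf w \<eta>2 + Bf w e"
  using assms by (simp add: frame_comb_def Bf_vadd_right Bf_vscale_right l2_vadd l2_vscale)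

lemma Bf_frame_comb:
  assumes "e \<in> E" "f \<in> E"
  shows "Bf (frame_comb a b e) (frame_comb c d f) = a * cnj d + b * cnj c + Bf e f"
  using assms E_l2 by (simp add: Bf_frame_comb_left Bf_frame_comb_right l2_frame_comb)

lemma frame_comb_inject:
  assumes "e \<in> E" "f \<in> E" "frame_comb a b e = frame_comb c d f"
  shows "a = c" "b = d" "e = f"
proof -
  have "Bf (frame_comb a b e) \<eta>2 = Bf (frame_comb c d f) \<eta>2"
    "Bf (frame_comb a b e) \<eta>1 = Bf (frame_comb c d f) \<eta>1"
    using assms(3) by simp_all
  then show ac: "a = c" and bd: "b = d"
    using assms(1,2) E_l2 by (simp_all add: Bf_frame_comb_left)
  show "e = f"
    using assms(3) unfolding frame_comb_def ac bd by (simp add: fun_eq_iff vadd_apply)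
qed

definition E_proj :: "vec \<Rightarrow> vec" where
  "E_proj v = vadd v (vadd (vscale (- Bf v \<eta>2) \<eta>1) (vscale (- Bf v \<eta>1) \<eta>2))"

lemma E_proj_in_E: "v \<in> l2 \<Longrightarrow> E_proj v \<in> E"
  by (intro E_I) (simp_all add: E_proj_def Bf_vadd_left Bf_vscale_left l2_vadd l2_vscale)

lemma frame_decomp: "v = frame_comb (Bf v \<eta>2) (Bf v \<eta>1) (E_proj v)"
  by (simp add: E_proj_def frame_comb_def fun_eq_iff vadd_apply vscale_apply)

lemma E_proj_frame_comb:
  assumes "e \<in> E"
  shows "E_proj (frame_comb a b e) = e"
  using assms E_l2[OF assms]
  by (simp add: E_proj_def Bf_frame_comb_left l2_frame_comb)
    (simp add: frame_comb_def fun_eq_iff vadd_apply vscale_apply)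

lemma frame_comb_vzero:
  "frame_comb a 0 vzero = vscale a \<eta>1" "frame_comb 0 b vzero = vscale b \<eta>2"
  "frame_comb 0 0 e = e"
  by (simp_all add: frame_comb_def fun_eq_iff vadd_apply vscale_apply vzero_def)

lemma vscale_frame_comb: "vscale u (frame_comb a b e) = frame_comb (u * a) (u * b) (vscale u e)"
  by (simp add: frame_comb_def fun_eq_iff vadd_apply vscale_apply algebra_simps)

lemma UB_frame_comb:
  assumes "T \<in> UB" "e \<in> l2"
  shows "T (frame_comb a b e) = vadd (vadd (vscale a (T \<eta>1)) (vscale b (T \<eta>2))) (T e)"
  using assms by (simp add: frame_comb_def UB_vadd UB_vscale l2_vadd l2_vscale)

text \<open>\<open>\<eta>1 + \<eta>2\<close> is timelike, so a multiple of it moves any \<open>e \<in> E\<close> into the negative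
  definite hyperplane \<open>v 0 = 0\<close>.\<close>

lemma E_negative_definite:
  assumes "e \<in> E" "Re (Bf e e) \<ge> 0"
  shows "e = vzero"
proof -
  define x where "x = vadd \<eta>1 \<eta>2"
  have x: "x \<in> l2" "Bf x x = 2" "Bf e x = 0" "Bf x e = 0"
    using assms(1) E_l2 by (simp_all add: x_def Bf_vadd_left Bf_vadd_right l2_vadd)
  have "x 0 \<noteq> 0"
    using Re_Bf_self_le[OF x(1)] x(2) by auto
  define \<mu> where "\<mu> = - (e 0 / x 0)"
  define y where "y = vadd e (vscale \<mu> x)"
  have "y \<in> l2" "y 0 = 0"
    using assms(1) E_l2 x(1) \<open>x 0 \<noteq> 0\<close> by (auto simp: y_def \<mu>_def vadd_apply vscale_apply)
  moreover have "Bf y y = Bf e e + \<mu> * cnj \<mu> * 2"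
    using E_l2[OF assms(1)] x
    by (simp add: y_def Bf_vadd_left Bf_vadd_right Bf_vscale_left Bf_vscale_right l2_vadd l2_vscale)
  then have "Re (Bf y y) \<ge> 0"
    using assms(2) by (simp add: complex_norm_square[symmetric])
  ultimately have "y = vzero"
    by (rule vzero_if_Re_Bf_self_nonneg)
  then have e: "e = vscale (- \<mu>) x"
    by (simp add: y_def fun_eq_iff vadd_apply vscale_apply vzero_def eq_neg_iff_add_eq_0)
  have "Bf e \<eta>1 = - \<mu>"
    unfolding e using x(1) by (simp add: Bf_vscale_left x_def Bf_vadd_left)
  then show ?thesis
    using assms(1) e by simp
qed

definition innerE :: "vec \<Rightarrow> vec \<Rightarrow> real" where
  "innerE e f = - Re (Bf e f)"

definition normE :: "vec \<Rightarrow> real" where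
  "normE e = sqrt (- Re (Bf e e))"

lemma normE_sq: "e \<in> E \<Longrightarrow> (normE e)\<^sup>2 = - Re (Bf e e)"
  using E_negative_definite[of e] by (cases "e = vzero") (auto simp: normE_def)

lemma normE_nonneg: "e \<in> E \<Longrightarrow> normE e \<ge> 0"
  using E_negative_definite[of e] by (cases "e = vzero") (auto simp: normE_def)

lemma normE_eq_0_iff: "e \<in> E \<Longrightarrow> normE e = 0 \<longleftrightarrow> e = vzero"
  using E_negative_definite[of e] by (auto simp: normE_def)

lemma normE_vzero [simp]: "normE vzero = 0"
  by (simp add: normE_def)

lemma normE_UB: "T \<in> UB \<Longrightarrow> e \<in> l2 \<Longrightarrow> normE (T e) = normE e"
  by (simp add: normE_def UB_Bf)

lemma normE_vscale:
  assumes "e \<in> E"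
  shows "normE (vscale a e) = cmod a * normE e"
proof -
  have "Bf (vscale a e) (vscale a e) = (a * cnj a) * Bf e e"
    using E_l2[OF assms] by (simp add: Bf_vscale_left Bf_vscale_right l2_vscale mult.assoc)
  also have "\<dots> = of_real ((cmod a)\<^sup>2) * Bf e e"
    by (simp only: complex_norm_square)
  finally have "- Re (Bf (vscale a e) (vscale a e)) = (cmod a)\<^sup>2 * (- Re (Bf e e))"
    by simp
  then have "normE (vscale a e) = sqrt ((cmod a)\<^sup>2) * sqrt (- Re (Bf e e))"
    unfolding normE_def by (simp only: real_sqrt_mult)
  then show ?thesis
    by (simp add: normE_def)
qed

lemma innerE_commute:
  assumes "e \<in> l2" "f \<in> l2"
  shows "innerE e f = innerE f e"
proof -
  have "Bf e f = cnj (Bf f e)"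
    using assms by (simp add: cnj_Bf)
  then show ?thesis
    by (simp add: innerE_def)
qed

lemma normE_vadd_sq:
  assumes "e \<in> E" "f \<in> E"
  shows "(normE (vadd e f))\<^sup>2 = (normE e)\<^sup>2 + (normE f)\<^sup>2 + 2 * innerE e f"
proof -
  have "Bf (vadd e f) (vadd e f) = Bf e e + Bf e f + cnj (Bf e f) + Bf f f"
    using assms E_l2 by (simp add: Bf_vadd_left Bf_vadd_right l2_vadd cnj_Bf)
  then show ?thesis
    using assms by (simp add: normE_sq innerE_def E_vadd)
qed

lemma innerE_Cauchy_Schwarz:
  assumes "e \<in> E" "f \<in> E"
  shows "\<bar>innerE e f\<bar> \<le> normE e * normE f"
proof -
  define p q r where "p = (normE f)\<^sup>2" "q = innerE e f" "r = (normE e)\<^sup>2"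
  have quadratic: "0 \<le> r + 2 * t * q + t\<^sup>2 * p" for t :: real
  proof -
    have "innerE e (vscale (of_real t) f) = t * q"
      using assms E_l2 by (simp add: p_q_r_def innerE_def Bf_vscale_right)
    then have "(normE (vadd e (vscale (of_real t) f)))\<^sup>2 = r + 2 * t * q + t\<^sup>2 * p"
      using assms by (simp add: normE_vadd_sq normE_vscale E_vscale p_q_r_def power_mult_distrib)
    then show ?thesis
      using zero_le_power2[of "normE (vadd e (vscale (of_real t) f))"] by linarith
  qed
  have "q\<^sup>2 \<le> r * p"
  proof (cases "p = 0")
    case True
    then have "q = 0"
      using quadratic[of "- (r + 1) / (2 * q)"] by (cases "q = 0") (auto simp: field_simps)
    then show ?thesis
      using True by simp
  next
    case False
    then have "p > 0"
      using p_q_r_def by simp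
    have "0 \<le> r + 2 * (- q / p) * q + (- q / p)\<^sup>2 * p"
      by (rule quadratic)
    also have "\<dots> = r - q\<^sup>2 / p"
      using \<open>p > 0\<close> by (simp add: field_simps power2_eq_square)
    finally show ?thesis
      using \<open>p > 0\<close> by (simp add: pos_divide_le_eq mult.commute)
  qed
  then have "q\<^sup>2 \<le> (normE e * normE f)\<^sup>2"
    by (simp add: p_q_r_def power_mult_distrib)
  moreover have "normE e * normE f \<ge> 0"
    using assms normE_nonneg by simp
  ultimately show ?thesis
    by (simp add: p_q_r_def power2_le_iff_abs_le)
qed

lemma cmod_Bf_E_le:
  assumes "e \<in> E" "f \<in> E"
  shows "cmod (Bf e f) \<le> normE e * normE f"
proof -
  define s where "s = Bf e f"
  have "cnj s * s = of_real ((cmod s)\<^sup>2)"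
    by (subst complex_norm_square) (simp add: mult.commute)
  then have "innerE (vscale (- cnj s) e) f = (cmod s)\<^sup>2"
    using E_l2[OF assms(1)] E_l2[OF assms(2)] by (simp add: innerE_def Bf_vscale_left s_def)
  then have "(cmod s)\<^sup>2 \<le> cmod s * (normE e * normE f)"
    using innerE_Cauchy_Schwarz[of "vscale (- cnj s) e" f] assms
    by (simp add: E_vscale normE_vscale mult.assoc)
  then show ?thesis
    unfolding s_def[symmetric]
    by (cases "s = 0") (auto simp: power2_eq_square normE_nonneg assms)
qed

lemma normE_triangle_rev:
  assumes "e \<in> E" "f \<in> E"
  shows "normE e - normE f \<le> normE (vadd e f)"
proof -
  have "(normE e - normE f)\<^sup>2 \<le> (normE (vadd e f))\<^sup>2"
    using normE_vadd_sq[OF assms] innerE_Cauchy_Schwarz[OF assms] by (simp add: power2_diff)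
  then have "\<bar>normE e - normE f\<bar> \<le> normE (vadd e f)"
    using assms normE_nonneg[of "vadd e f"] by (simp add: E_vadd power2_le_iff_abs_le)
  then show ?thesis
    by linarith
qed

lemma normE_triangle_eq:
  assumes "e \<in> E" "f \<in> E" "normE (vadd e f) = normE e + normE f" "normE e > 0"
  shows "f = vscale (of_real (normE f / normE e)) e"
proof -
  define g where "g = vadd (vscale (of_real (normE e)) f) (vscale (- of_real (normE f)) e)"
  have "innerE f e = normE e * normE f"
    using normE_vadd_sq[OF assms(1,2)] assms(3) innerE_commute[OF E_l2 E_l2, OF assms(1,2)]
    by (simp add: power2_sum)
  then have "Re (Bf f e) = - (normE e * normE f)"
    by (simp add: innerE_def)
  then have "innerE (vscale (of_real (normE e)) f) (vscale (- of_real (normE f)) e)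
      = - ((normE e)\<^sup>2 * (normE f)\<^sup>2)"
    using E_l2[OF assms(1)] E_l2[OF assms(2)]
    by (simp add: innerE_def Bf_vscale_left Bf_vscale_right l2_vscale power2_eq_square)
  then have "(normE g)\<^sup>2 = 0"
    using assms(1,2) normE_nonneg
    by (simp add: g_def normE_vadd_sq E_vscale normE_vscale power_mult_distrib)
  then have "g = vzero"
    using normE_eq_0_iff assms(1,2) by (simp add: g_def E_vadd E_vscale)
  then have "of_real (normE e) * f n + - of_real (normE f) * e n = 0" for n
    unfolding g_def by (metis vadd_apply vscale_apply vzero_apply)
  then have "f n = of_real (normE f / normE e) * e n" for n
    using assms(4) by (simp add: field_simps add_eq_0_iff)
  then show ?thesis
    by (simp add: fun_eq_iff vscale_apply)
qed

end

section \<open>Isometries preserving the axis of the null frame\<close>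

context null_frame
begin

definition diagonal :: "(vec \<Rightarrow> vec) \<Rightarrow> complex \<Rightarrow> complex \<Rightarrow> bool" where
  "diagonal A \<alpha> \<beta> \<longleftrightarrow> A \<in> UB \<and> A \<eta>1 = vscale \<alpha> \<eta>1 \<and> A \<eta>2 = vscale \<beta> \<eta>2"

lemma diagonal_cnj:
  assumes "diagonal A \<alpha> \<beta>"
  shows "\<alpha> * cnj \<beta> = 1"
proof -
  have "A \<in> UB" "A \<eta>1 = vscale \<alpha> \<eta>1" "A \<eta>2 = vscale \<beta> \<eta>2"
    using assms by (simp_all add: diagonal_def)
  then have "Bf (vscale \<alpha> \<eta>1) (vscale \<beta> \<eta>2) = 1"
    using UB_Bf[of A \<eta>1 \<eta>2] by simp
  then show ?thesis
    by (simp add: Bf_vscale_left Bf_vscale_right l2_vscale mult.commute)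
qed

lemma diagonal_nonzero: "diagonal A \<alpha> \<beta> \<Longrightarrow> \<alpha> \<noteq> 0"
  using diagonal_cnj by force

lemma diagonal_beta:
  assumes "diagonal A \<alpha> \<beta>"
  shows "\<beta> = 1 / cnj \<alpha>"
proof -
  have "cnj \<beta> = 1 / \<alpha>"
    using diagonal_cnj[OF assms] diagonal_nonzero[OF assms] by (simp add: field_simps mult.commute)
  then have "cnj (cnj \<beta>) = cnj (1 / \<alpha>)"
    by (rule arg_cong)
  then show ?thesis
    by simp
qed

lemma diagonal_frame_comb:
  assumes "diagonal A \<alpha> \<beta>" "e \<in> l2"
  shows "A (frame_comb a b e) = frame_comb (\<alpha> * a) (\<beta> * b) (A e)"
  using assms by (simp add: diagonal_def UB_frame_comb) (simp add: frame_comb_def vscale_vscale mult.commute)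

lemma diagonal_E:
  assumes "diagonal A \<alpha> \<beta>" "e \<in> E"
  shows "A e \<in> E"
proof (rule E_I)
  have A: "A \<in> UB" "A \<eta>1 = vscale \<alpha> \<eta>1" "A \<eta>2 = vscale \<beta> \<eta>2"
    using assms(1) by (simp_all add: diagonal_def)
  have "\<alpha> \<noteq> 0" "\<beta> \<noteq> 0"
    using diagonal_cnj[OF assms(1)] by auto
  have e: "e \<in> l2"
    using assms(2) by (rule E_l2)
  have "Bf (A e) (A (vscale (1 / \<alpha>) \<eta>1)) = Bf e (vscale (1 / \<alpha>) \<eta>1)"
    "Bf (A e) (A (vscale (1 / \<beta>) \<eta>2)) = Bf e (vscale (1 / \<beta>) \<eta>2)"
    using A(1) e by (simp_all add: UB_Bf l2_vscale)
  moreover have "A (vscale (1 / \<alpha>) \<eta>1) = \<eta>1" "A (vscale (1 / \<beta>) \<eta>2) = \<eta>2"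
    using A \<open>\<alpha> \<noteq> 0\<close> \<open>\<beta> \<noteq> 0\<close> by (simp_all add: UB_vscale vscale_vscale)
  ultimately show "Bf (A e) \<eta>1 = 0" "Bf (A e) \<eta>2 = 0"
    using assms(2) e by (simp_all add: Bf_vscale_right)
  show "A e \<in> l2"
    using A(1) e by (rule UB_l2)
qed

lemma diagonal_cmod_Bf_ge:
  assumes A: "diagonal A \<alpha> \<beta>" and x: "x \<in> l2"
  shows "cosh (ln (cmod \<alpha>)) * Re (Bf x x) \<le> cmod (Bf (A x) x)"
proof -
  define e where "e = E_proj x"
  have e: "e \<in> E" and xe: "x = frame_comb (Bf x \<eta>2) (Bf x \<eta>1) e"
    using x frame_decomp[of x] by (simp_all add: e_def E_proj_in_E)
  define z where "z = Bf x \<eta>2 * cnj (Bf x \<eta>1)"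
  define r where "r = cmod \<alpha>"
  have r: "r > 0"
    using diagonal_nonzero[OF A] by (simp add: r_def)
  have ch1: "cosh (ln r) = (r + 1 / r) / 2"
    using r by (simp add: cosh_ln_real field_simps)
  have ch2: "cosh (ln r) \<ge> 1"
    by (rule cosh_real_ge_1)
  have Ae: "A e \<in> E" "normE (A e) = normE e"
    using A e by (simp_all add: diagonal_E normE_UB diagonal_def E_l2)
  have Bxx: "Re (Bf x x) = 2 * Re z - (normE e)\<^sup>2"
    by (subst (1 2) xe) (simp add: Bf_frame_comb e normE_sq z_def mult.commute)
  have BAx: "Bf (A x) x = (\<alpha> * z + cnj z / cnj \<alpha>) + Bf (A e) e"
    by (subst (1 2) xe) (simp add: diagonal_frame_comb[OF A E_l2[OF e]] diagonal_beta[OF A]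
        Bf_frame_comb e Ae z_def mult.commute)
  have "cmod (Bf (A e) e) \<le> (normE e)\<^sup>2"
    using cmod_Bf_E_le[OF Ae(1) e] Ae(2) by (simp add: power2_eq_square)
  moreover have "2 * cosh (ln r) * Re z = (r + 1 / r) * Re z"
    using ch1 by simp
  moreover have "\<dots> \<le> cmod (\<alpha> * z + cnj z / cnj \<alpha>)"
    unfolding r_def by (rule cmod_add_cnj_div_cnj_ge[OF diagonal_nonzero[OF A]])
  moreover have "(normE e)\<^sup>2 \<le> cosh (ln r) * (normE e)\<^sup>2"
    using ch2 by (simp add: mult_le_cancel_right1)
  ultimately have "cosh (ln r) * Re (Bf x x)
      \<le> cmod (\<alpha> * z + cnj z / cnj \<alpha>) - cmod (Bf (A e) e)"
    unfolding Bxx by (simp add: algebra_simps)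
  also have "\<dots> \<le> cmod (Bf (A x) x)"
    unfolding BAx by (rule norm_diff_ineq)
  finally show ?thesis
    by (simp add: r_def)
qed

lemma diagonal_hdist_ge:
  assumes A: "diagonal A \<alpha> \<beta>" and x: "hyp_pt x"
  shows "\<bar>ln (cmod \<alpha>)\<bar> \<le> hdist (A x) x"
proof -
  define q where "q = Re (Bf x x)"
  define t where "t = cmod (Bf (A x) x) / sqrt (Re (Bf (A x) (A x)) * Re (Bf x x))"
  have "q > 0" "x \<in> l2"
    using x by (simp_all add: hyp_pt_def q_def)
  moreover have "Bf (A x) (A x) = Bf x x"
    using A \<open>x \<in> l2\<close> by (simp add: diagonal_def UB_Bf)
  ultimately have "t = cmod (Bf (A x) x) / q"
    by (simp add: t_def q_def)
  then have ge: "cosh \<bar>ln (cmod \<alpha>)\<bar> \<le> t"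
    using diagonal_cmod_Bf_ge[OF A \<open>x \<in> l2\<close>] \<open>q > 0\<close> by (simp add: q_def pos_le_divide_eq)
  moreover have "1 \<le> cosh \<bar>ln (cmod \<alpha>)\<bar>"
    by (rule cosh_real_ge_1)
  ultimately have "\<not> arcosh t < arcosh (cosh \<bar>ln (cmod \<alpha>)\<bar>)"
    by (subst arcosh_less_iff_real) auto
  moreover have "arcosh (cosh \<bar>ln (cmod \<alpha>)\<bar>) = \<bar>ln (cmod \<alpha>)\<bar>"
    by (rule arcosh_cosh_real) simp
  ultimately show ?thesis
    unfolding hdist_def t_def[symmetric] by linarith
qed

lemma hyp_pt_frame_comb: "hyp_pt (frame_comb 1 1 vzero)"
  by (simp add: hyp_pt_def Bf_frame_comb l2_frame_comb)

lemma diagonal_hdist_frame_comb: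
  assumes A: "diagonal A \<alpha> \<beta>"
  shows "hdist (A (frame_comb 1 1 vzero)) (frame_comb 1 1 vzero) = \<bar>ln (cmod \<alpha>)\<bar>"
proof -
  define x where "x = frame_comb 1 1 vzero"
  define r where "r = cmod \<alpha>"
  have "r > 0"
    using diagonal_nonzero[OF A] by (simp add: r_def)
  have Bxx: "Bf x x = 2" "Bf (A x) (A x) = 2"
    using A UB_Bf[of A x x] by (simp_all add: x_def Bf_frame_comb diagonal_def l2_frame_comb)
  have "A x = frame_comb \<alpha> \<beta> vzero"
    using diagonal_frame_comb[OF A, of vzero 1 1] A by (simp add: x_def diagonal_def UB_vzero)
  then have "Bf (A x) x = \<alpha> + \<beta>"
    by (simp add: x_def Bf_frame_comb)
  also have "\<dots> = \<alpha> * of_real (1 + 1 / r\<^sup>2)"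
  proof -
    have "\<beta> = \<alpha> / (\<alpha> * cnj \<alpha>)"
      using diagonal_nonzero[OF A] by (simp add: diagonal_beta[OF A])
    then show ?thesis
      by (simp add: mult_cnj_eq_norm_power2 r_def distrib_left)
  qed
  finally have "Bf (A x) x = \<alpha> * of_real (1 + 1 / r\<^sup>2)" .
  then have "cmod (Bf (A x) x) = cmod \<alpha> * cmod (complex_of_real (1 + 1 / r\<^sup>2))"
    by (simp only: norm_mult)
  also have "\<dots> = r * \<bar>1 + 1 / r\<^sup>2\<bar>"
    by (simp only: norm_of_real r_def)
  also have "\<dots> = 2 * cosh \<bar>ln r\<bar>"
    using \<open>r > 0\<close> by (simp add: cosh_ln_real field_simps power2_eq_square)
  finally have "hdist (A x) x = arcosh (cosh \<bar>ln r\<bar>)"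
    by (simp add: hdist_def Bxx del: cosh_real_abs)
  also have "\<dots> = \<bar>ln r\<bar>"
    by (rule arcosh_cosh_real) simp
  finally show ?thesis
    unfolding x_def r_def .
qed

lemma diagonal_min_displacement:
  assumes "diagonal A \<alpha> \<beta>"
  shows "Inf ((\<lambda>x. hdist (A x) x) ` {x. hyp_pt x}) = \<bar>ln (cmod \<alpha>)\<bar>"
proof (rule cInf_eq_minimum)
  show "\<bar>ln (cmod \<alpha>)\<bar> \<in> (\<lambda>x. hdist (A x) x) ` {x. hyp_pt x}"
    by (rule image_eqI[where x = "frame_comb 1 1 vzero"])
      (simp_all add: diagonal_hdist_frame_comb[OF assms] hyp_pt_frame_comb)
next
  fix y
  assume "y \<in> (\<lambda>x. hdist (A x) x) ` {x. hyp_pt x}"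
  then obtain x where "hyp_pt x" "y = hdist (A x) x"
    by blast
  then show "\<bar>ln (cmod \<alpha>)\<bar> \<le> y"
    using diagonal_hdist_ge[OF assms] by simp
qed

lemma diagonal_E_eigenvector:
  assumes A: "diagonal A \<alpha> \<beta>" and e: "e \<in> E" and "A e = vscale \<mu> e" "cmod \<mu> \<noteq> 1"
  shows "e = vzero"
proof -
  have "normE e = cmod \<mu> * normE e"
    using normE_UB[of A e] normE_vscale[OF e] assms(3) A e by (simp add: diagonal_def E_l2)
  then show ?thesis
    using assms(4) normE_eq_0_iff[OF e] by (metis mult_cancel_right1)
qed

lemma diagonal_beta_neq:
  assumes A: "diagonal A \<alpha> \<beta>" and "cmod \<alpha> \<noteq> 1"
  shows "cmod \<beta> \<noteq> 1" "\<beta> \<noteq> \<alpha>"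
proof -
  have "cmod \<beta> * cmod \<alpha> = 1"
    using diagonal_nonzero[OF A] by (simp add: diagonal_beta[OF A] norm_divide)
  moreover have "cmod \<alpha> * cmod \<alpha> \<noteq> 1"
  proof
    assume "cmod \<alpha> * cmod \<alpha> = 1"
    then have "(cmod \<alpha> - 1) * (cmod \<alpha> + 1) = 0"
      by (simp add: algebra_simps)
    then show False
      using \<open>cmod \<alpha> \<noteq> 1\<close> by (simp add: add_nonneg_eq_0_iff)
  qed
  ultimately show "cmod \<beta> \<noteq> 1" "\<beta> \<noteq> \<alpha>"
    using \<open>cmod \<alpha> \<noteq> 1\<close> by auto
qed

lemma diagonal_isotropic_eigenvector:
  assumes A: "diagonal A \<alpha> \<beta>" and "cmod \<alpha> \<noteq> 1"
    and w: "isotropic w" "A w = vscale \<mu> w"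
  shows "same_line \<eta>1 w \<or> same_line \<eta>2 w"
proof -
  define a b e where "a = Bf w \<eta>2" and "b = Bf w \<eta>1" and "e = E_proj w"
  have e: "e \<in> E" and we: "w = frame_comb a b e"
    using w(1) frame_decomp[of w] by (simp_all add: a_def b_def e_def E_proj_in_E isotropic_def)
  have "frame_comb (\<alpha> * a) (\<beta> * b) (A e) = frame_comb (\<mu> * a) (\<mu> * b) (vscale \<mu> e)"
    using w(2) diagonal_frame_comb[OF A E_l2[OF e]] by (simp add: we vscale_frame_comb)
  then have eq: "\<alpha> * a = \<mu> * a" "\<beta> * b = \<mu> * b" "A e = vscale \<mu> e"
    using frame_comb_inject[OF diagonal_E[OF A e] E_vscale[OF e]] by blast+
  note \<beta> = diagonal_beta_neq[OF A \<open>cmod \<alpha> \<noteq> 1\<close>]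
  consider "a \<noteq> 0" | "a = 0" "b \<noteq> 0" | "a = 0" "b = 0"
    by blast
  then show ?thesis
  proof cases
    case 1
    then have "\<mu> = \<alpha>" "b = 0"
      using eq(1,2) \<beta>(2) by auto
    then have "w = vscale a \<eta>1"
      using diagonal_E_eigenvector[OF A e eq(3)] \<open>cmod \<alpha> \<noteq> 1\<close> by (simp add: we frame_comb_vzero)
    then show ?thesis
      using same_line_vscale by blast
  next
    case 2
    then have "\<mu> = \<beta>"
      using eq(2) by simp
    then have "w = vscale b \<eta>2"
      using diagonal_E_eigenvector[OF A e eq(3)] \<beta>(1) 2 by (simp add: we frame_comb_vzero)
    then show ?thesis
      using same_line_vscale by blast
  next
    case 3
    then have "w = e"
      by (simp add: we frame_comb_vzero)
    then show ?thesis
      using E_negative_definite[OF e] w(1) by (simp add: isotropic_def)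
  qed
qed

definition preserves_ends :: "(vec \<Rightarrow> vec) \<Rightarrow> bool" where
  "preserves_ends X \<longleftrightarrow>
     (same_line \<eta>1 (X \<eta>1) \<and> same_line \<eta>2 (X \<eta>2)) \<or> (same_line \<eta>2 (X \<eta>1) \<and> same_line \<eta>1 (X \<eta>2))"

lemma preserves_ends_proj_eq:
  assumes "proj_eq X Y" "preserves_ends Y"
  shows "preserves_ends X"
  using assms(2) same_line_proj_eq[OF assms(1) l2_\<eta>(1)] same_line_proj_eq[OF assms(1) l2_\<eta>(2)]
  unfolding preserves_ends_def by blast

lemma preserves_ends_comp:
  assumes "Y \<in> UB" "preserves_ends Y" "preserves_ends Z"
  shows "preserves_ends (Y \<circ> Z)"
proof -
  have chain: "same_line p (Y (Z q))" if "same_line p (Y d)" "same_line d (Z q)" "d \<in> l2"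
    for p q d
    using same_line_trans[OF that(1) same_line_UB[OF assms(1) that(3,2)]] .
  note chain1 = chain[OF _ _ l2_\<eta>(1)] and chain2 = chain[OF _ _ l2_\<eta>(2)]
  show ?thesis
    using assms(2,3) chain1[of \<eta>1 \<eta>1] chain1[of \<eta>1 \<eta>2] chain1[of \<eta>2 \<eta>1] chain1[of \<eta>2 \<eta>2]
      chain2[of \<eta>1 \<eta>1] chain2[of \<eta>1 \<eta>2] chain2[of \<eta>2 \<eta>1] chain2[of \<eta>2 \<eta>2]
    unfolding preserves_ends_def comp_def by blast
qed

lemma diagonal_preserves_ends:
  assumes "diagonal A \<alpha> \<beta>"
  shows "preserves_ends A"
proof -
  have "A \<eta>1 = vscale \<alpha> \<eta>1" "A \<eta>2 = vscale \<beta> \<eta>2"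
    using assms by (simp_all add: diagonal_def)
  then show ?thesis
    unfolding preserves_ends_def by (metis same_line_vscale)
qed

lemma preserves_ends_if_ends_to_ends:
  assumes W: "W \<in> UB"
    and "same_line \<eta>1 (W \<eta>1) \<or> same_line \<eta>2 (W \<eta>1)"
    and "same_line \<eta>1 (W \<eta>2) \<or> same_line \<eta>2 (W \<eta>2)"
  shows "preserves_ends W"
proof -
  have False if p1: "same_line p (W \<eta>1)" and p2: "same_line p (W \<eta>2)" for p
  proof -
    obtain s t where s: "W \<eta>1 = vscale s p" and t: "W \<eta>2 = vscale t p"
      using p1 p2 unfolding same_line_def by blast
    have "s \<noteq> 0"
      using s UB_nonzero[OF W l2_\<eta>(1) \<eta>_nonzero(1)] by auto
    have "W (vscale t \<eta>1) = W (vscale s \<eta>2)"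
      using s t W by (simp add: UB_vscale vscale_vscale mult.commute)
    then have "vscale t \<eta>1 = vscale s \<eta>2"
      using UB_inj[OF W] by (simp add: l2_vscale)
    then have "vscale (1 / s) (vscale t \<eta>1) = vscale (1 / s) (vscale s \<eta>2)"
      by simp
    then have "\<eta>2 = vscale (t / s) \<eta>1"
      using \<open>s \<noteq> 0\<close> by (simp add: vscale_vscale)
    then show False
      using \<eta>_not_same_line unfolding same_line_def by blast
  qed
  then show ?thesis
    using assms(2,3) unfolding preserves_ends_def by blast
qed

end

section \<open>The unipotent lifts \<open>T\<^sub>b\<close> and the cocycle \<open>(K, c)\<close>\<close>

locale unipotent_lift = null_frame \<eta>1 \<eta>2 for \<eta>1 \<eta>2 +
  fixes rho :: "complex^2^2 \<Rightarrow> vec \<Rightarrow> vec"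
    and T :: "real \<Rightarrow> vec \<Rightarrow> vec"
    and K :: "real \<Rightarrow> complex"
    and c :: "real \<Rightarrow> vec"
  assumes rep: "representation rho"
    and ell: "has_ell rho 2"
    and \<eta>1_fixed: "\<forall>l>0. \<forall>b. same_line \<eta>1 (rho (gmat l b) \<eta>1)"
    and \<eta>2_fixed: "\<forall>l>0. l \<noteq> 1 \<longrightarrow> same_line \<eta>2 (rho (gmat l 0) \<eta>2)"
    and lift: "\<forall>b. T b \<in> UB \<and> proj_eq (T b) (rho (gmat 1 b)) \<and> T b \<eta>1 = \<eta>1"
    and T_\<eta>2_decomp: "\<forall>b. T b \<eta>2 = vadd (vadd (vscale (K b) \<eta>1) \<eta>2) (c b)
                         \<and> c b \<in> l2 \<and> Bf (c b) \<eta>1 = 0 \<and> Bf (c b) \<eta>2 = 0"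
begin

lemma rho_UB: "g \<in> SU11 \<Longrightarrow> rho g \<in> UB"
  using rep by (simp add: representation_def)

lemma rho_l2: "g \<in> SU11 \<Longrightarrow> v \<in> l2 \<Longrightarrow> rho g v \<in> l2"
  by (rule UB_l2[OF rho_UB])

lemma rho_mult: "g \<in> SU11 \<Longrightarrow> h \<in> SU11 \<Longrightarrow> proj_eq (rho (g ** h)) (rho g \<circ> rho h)"
  using rep by (simp add: representation_def)

lemma rho_uminus:
  assumes "g \<in> SU11"
  shows "proj_eq (rho (- g)) (rho g)"
proof -
  have neg: "proj_eq (rho (- mat 1)) id"
    using rep unfolding representation_def by blast
  have "proj_eq (rho (- g)) (rho (- mat 1) \<circ> rho g)"
    using rho_mult[OF uminus_mat_1_in_SU11 assms] by (simp add: uminus_mat_1_mult)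
  also have "proj_eq (rho (- mat 1) \<circ> rho g) (id \<circ> rho g)"
    by (rule proj_eq_comp_right[OF rho_l2[OF assms] neg])
  finally show ?thesis
    by simp
qed

lemma T_UB: "T b \<in> UB"
  using lift by blast

lemma T_\<eta>1: "T b \<eta>1 = \<eta>1"
  using lift by blast

lemma T_proj_eq: "proj_eq (T b) (rho (gmat 1 b))"
  using lift by blast

lemma T_l2: "v \<in> l2 \<Longrightarrow> T b v \<in> l2"
  using UB_l2[OF T_UB] .

lemma c_E: "c b \<in> E"
  using T_\<eta>2_decomp by (intro E_I) blast+

lemma T_\<eta>2: "T b \<eta>2 = frame_comb (K b) 1 (c b)"
  using T_\<eta>2_decomp by (simp add: frame_comb_def)

lemma T_add:
  assumes "v \<in> l2"
  shows "T (b1 + b2) v = T b1 (T b2 v)"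
proof -
  have "gmat 1 b1 ** gmat 1 b2 = gmat 1 (b1 + b2)"
    by (simp add: gmat_mult add.commute)
  then have "proj_eq (rho (gmat 1 (b1 + b2))) (rho (gmat 1 b1) \<circ> rho (gmat 1 b2))"
    using rho_mult[OF gmat_in_SU11 gmat_in_SU11, of 1 1 b1 b2] by simp
  also have "proj_eq (rho (gmat 1 b1) \<circ> rho (gmat 1 b2)) (T b1 \<circ> rho (gmat 1 b2))"
    by (rule proj_eq_comp_right[OF rho_l2[OF gmat_in_SU11] proj_eq_sym[OF T_proj_eq]]) simp
  also have "proj_eq (T b1 \<circ> rho (gmat 1 b2)) (T b1 \<circ> T b2)"
    by (rule proj_eq_comp_left[OF T_UB T_l2 proj_eq_sym[OF T_proj_eq]])
  finally have "proj_eq (T (b1 + b2)) (T b1 \<circ> T b2)"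
    by (rule proj_eq_trans[OF T_proj_eq])
  then show ?thesis
    using proj_eq_eqI[OF _ l2_\<eta>(1) _ _ assms] T_\<eta>1 \<eta>_nonzero by simp
qed

lemma T_zero:
  assumes "v \<in> l2"
  shows "T 0 v = v"
proof -
  have "T 0 (T 0 v) = T 0 v"
    using T_add[OF assms, of 0 0] by simp
  then show ?thesis
    using UB_inj[OF T_UB T_l2[OF assms] assms] by blast
qed

lemma K_c_zero: "K 0 = 0" "c 0 = vzero"
proof -
  have eq: "frame_comb (K 0) 1 (c 0) = frame_comb 0 1 vzero"
    using T_\<eta>2[of 0] T_zero[of \<eta>2] by (simp add: frame_comb_vzero)
  show "K 0 = 0"
    by (rule frame_comb_inject(1)[OF c_E E_vzero eq])
  show "c 0 = vzero"
    by (rule frame_comb_inject(3)[OF c_E E_vzero eq])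
qed

definition alpha :: "real \<Rightarrow> complex" where
  "alpha l = (SOME \<mu>. rho (gmat l 0) \<eta>1 = vscale \<mu> \<eta>1)"

definition beta :: "real \<Rightarrow> complex" where
  "beta l = (SOME \<mu>. rho (gmat l 0) \<eta>2 = vscale \<mu> \<eta>2)"

lemma rho_gmat_\<eta>1:
  assumes "l > 0"
  shows "rho (gmat l 0) \<eta>1 = vscale (alpha l) \<eta>1"
proof -
  have "\<exists>\<mu>. rho (gmat l 0) \<eta>1 = vscale \<mu> \<eta>1"
    using \<eta>1_fixed assms unfolding same_line_def by blast
  then show ?thesis
    unfolding alpha_def by (rule someI_ex)
qed

lemma rho_gmat_\<eta>2:
  assumes "l > 0" "l \<noteq> 1"
  shows "rho (gmat l 0) \<eta>2 = vscale (beta l) \<eta>2"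
proof -
  have "\<exists>\<mu>. rho (gmat l 0) \<eta>2 = vscale \<mu> \<eta>2"
    using \<eta>2_fixed assms unfolding same_line_def by blast
  then show ?thesis
    unfolding beta_def by (rule someI_ex)
qed

lemma diagonal_rho_gmat: "l > 0 \<Longrightarrow> l \<noteq> 1 \<Longrightarrow> diagonal (rho (gmat l 0)) (alpha l) (beta l)"
  by (simp add: diagonal_def rho_UB gmat_in_SU11 rho_gmat_\<eta>1 rho_gmat_\<eta>2)

lemma alpha_nonzero:
  assumes "l > 0"
  shows "alpha l \<noteq> 0"
  using UB_nonzero[OF rho_UB[OF gmat_in_SU11] l2_\<eta>(1) \<eta>_nonzero(1), of l 0] rho_gmat_\<eta>1[OF assms]
    assms by auto

lemma norm_alpha_mult:
  assumes "l > 0" "m > 0"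
  shows "cmod (alpha (l * m)) = cmod (alpha l) * cmod (alpha m)"
proof -
  have "gmat l 0 ** gmat m 0 = gmat (l * m) 0"
    using assms by (simp add: gmat_mult)
  then have "proj_eq (rho (gmat (l * m) 0)) (rho (gmat l 0) \<circ> rho (gmat m 0))"
    using rho_mult[OF gmat_in_SU11 gmat_in_SU11, of l m 0 0] assms by simp
  then obtain u where u: "cmod u = 1"
    "rho (gmat (l * m) 0) \<eta>1 = vscale u (rho (gmat l 0) (rho (gmat m 0) \<eta>1))"
    unfolding proj_eq_def by auto
  then have "vscale (alpha (l * m)) \<eta>1 = vscale (u * (alpha m * alpha l)) \<eta>1"
    using assms rho_UB[OF gmat_in_SU11]
    by (simp add: rho_gmat_\<eta>1 UB_vscale vscale_vscale)
  then have "alpha (l * m) = u * (alpha m * alpha l)"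
    by (rule vscale_cancel_right[OF \<eta>_nonzero(1)])
  then show ?thesis
    using u(1) by (simp add: norm_mult)
qed

lemma abs_ln_norm_alpha:
  assumes "l > 0"
  shows "\<bar>ln (cmod (alpha l))\<bar> = 2 * \<bar>ln l\<bar>"
proof (cases "l = 1")
  case True
  have "cmod (alpha 1) = cmod (alpha 1) * cmod (alpha 1)"
    using norm_alpha_mult[of 1 1] by simp
  then have "cmod (alpha 1) = 1"
    using alpha_nonzero[of 1] by simp
  then show ?thesis
    using True by simp
next
  case False
  have "min_disp rho l = \<bar>ln (cmod (alpha l))\<bar>"
    unfolding min_disp_def by (rule diagonal_min_displacement[OF diagonal_rho_gmat[OF assms False]])
  then show ?thesis
    using ell assms by (simp add: has_ell_def)
qed

lemma norm_alpha_powr: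
  obtains \<epsilon> :: real where "\<epsilon> = 1 \<or> \<epsilon> = -1" "\<And>l. l > 0 \<Longrightarrow> cmod (alpha l) = l powr (\<epsilon> * 2)"
  by (rule multiplicative_abs_ln_eq_powr[of "\<lambda>l. cmod (alpha l)" 2, OF _ _ _ that])
    (simp_all add: alpha_nonzero norm_alpha_mult abs_ln_norm_alpha)

lemma rho_gmat_T:
  assumes "l > 0" "v \<in> l2"
  shows "rho (gmat l 0) (T b v) = T (l\<^sup>2 * b) (rho (gmat l 0) v)"
proof -
  define A where "A = rho (gmat l 0)"
  have A: "A \<in> UB" "gmat l 0 \<in> SU11"
    using assms(1) by (simp_all add: A_def rho_UB gmat_in_SU11)
  have "gmat l 0 ** gmat 1 b = gmat l (l * b)" "gmat 1 (l\<^sup>2 * b) ** gmat l 0 = gmat l (l * b)"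
    using assms(1) by (simp_all add: gmat_mult power2_eq_square)
  then have g: "proj_eq (rho (gmat l (l * b))) (A \<circ> rho (gmat 1 b))"
    "proj_eq (rho (gmat l (l * b))) (rho (gmat 1 (l\<^sup>2 * b)) \<circ> A)"
    using rho_mult[OF A(2) gmat_in_SU11, of 1 b] rho_mult[OF gmat_in_SU11 A(2), of 1 "l\<^sup>2 * b"]
    by (simp_all add: A_def)
  have "proj_eq (A \<circ> T b) (A \<circ> rho (gmat 1 b))"
    by (rule proj_eq_comp_left[OF A(1) rho_l2[OF gmat_in_SU11] T_proj_eq]) simp
  also have "proj_eq (A \<circ> rho (gmat 1 b)) (rho (gmat 1 (l\<^sup>2 * b)) \<circ> A)"
    by (rule proj_eq_trans[OF proj_eq_sym[OF g(1)] g(2)])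
  also have "proj_eq (rho (gmat 1 (l\<^sup>2 * b)) \<circ> A) (T (l\<^sup>2 * b) \<circ> A)"
    by (rule proj_eq_comp_right[OF UB_l2[OF A(1)] proj_eq_sym[OF T_proj_eq]])
  finally have P: "proj_eq (A \<circ> T b) (T (l\<^sup>2 * b) \<circ> A)" .
  have "(A \<circ> T b) \<eta>1 = vscale (alpha l) \<eta>1" "(T (l\<^sup>2 * b) \<circ> A) \<eta>1 = vscale (alpha l) \<eta>1"
    using assms(1) by (simp_all add: A_def T_\<eta>1 rho_gmat_\<eta>1 UB_vscale[OF T_UB])
  moreover have "vscale (alpha l) \<eta>1 \<noteq> vzero"
    using vscale_cancel_right[OF \<eta>_nonzero(1), of "alpha l" 0] alpha_nonzero[OF assms(1)] by auto
  ultimately show ?thesis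
    using proj_eq_eqI[OF P l2_\<eta>(1) _ _ assms(2)] by (simp add: A_def)
qed

lemma K_c_scale:
  assumes l: "l > 0" "l \<noteq> 1"
  shows "K (l\<^sup>2 * b) = of_real ((cmod (alpha l))\<^sup>2) * K b"
    and "normE (c (l\<^sup>2 * b)) = cmod (alpha l) * normE (c b)"
proof -
  define A \<alpha> \<beta> where "A = rho (gmat l 0)" "\<alpha> = alpha l" "\<beta> = beta l"
  have A: "diagonal A \<alpha> \<beta>"
    unfolding A_\<alpha>_\<beta>_def by (rule diagonal_rho_gmat[OF l])
  have "frame_comb (\<alpha> * K b) (\<beta> * 1) (A (c b)) = A (T b \<eta>2)"
    by (simp add: T_\<eta>2 diagonal_frame_comb[OF A E_l2[OF c_E]])
  also have "\<dots> = T (l\<^sup>2 * b) (A \<eta>2)"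
    unfolding A_\<alpha>_\<beta>_def by (rule rho_gmat_T[OF l(1) l2_\<eta>(2)])
  also have "\<dots> = frame_comb (\<beta> * K (l\<^sup>2 * b)) (\<beta> * 1) (vscale \<beta> (c (l\<^sup>2 * b)))"
    using A by (simp add: diagonal_def UB_vscale[OF T_UB] T_\<eta>2 vscale_frame_comb)
  finally have "frame_comb (\<alpha> * K b) (\<beta> * 1) (A (c b))
      = frame_comb (\<beta> * K (l\<^sup>2 * b)) (\<beta> * 1) (vscale \<beta> (c (l\<^sup>2 * b)))" .
  note u = frame_comb_inject(1,3)[OF diagonal_E[OF A c_E] E_vscale[OF c_E] this]
  have "\<alpha> \<noteq> 0" "\<beta> = 1 / cnj \<alpha>"
    using diagonal_nonzero[OF A] diagonal_beta[OF A] by simp_all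
  then have "cnj \<alpha> * \<beta> = 1"
    by simp
  then have "K (l\<^sup>2 * b) = cnj \<alpha> * (\<beta> * K (l\<^sup>2 * b))"
    by (simp add: mult.assoc[symmetric])
  also have "\<dots> = \<alpha> * cnj \<alpha> * K b"
    using u(1) by (simp add: ac_simps)
  finally have "K (l\<^sup>2 * b) = \<alpha> * cnj \<alpha> * K b" .
  then show "K (l\<^sup>2 * b) = of_real ((cmod (alpha l))\<^sup>2) * K b"
    by (simp add: A_\<alpha>_\<beta>_def mult_cnj_eq_norm_power2)
  have "normE (c b) = cmod \<beta> * normE (c (l\<^sup>2 * b))"
    using u(2) normE_UB[of A "c b"] A c_E E_l2 by (simp add: normE_vscale c_E diagonal_def)
  then show "normE (c (l\<^sup>2 * b)) = cmod (alpha l) * normE (c b)"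
    using \<open>\<alpha> \<noteq> 0\<close> \<open>\<beta> = 1 / cnj \<alpha>\<close> by (simp add: A_\<alpha>_\<beta>_def norm_divide)
qed

lemma K_c_homogeneous:
  obtains \<epsilon> :: real where "\<epsilon> = 1 \<or> \<epsilon> = -1"
    "\<And>s. s > 0 \<Longrightarrow> K s = of_real (s powr (2 * \<epsilon>)) * K 1"
    "\<And>s. s > 0 \<Longrightarrow> normE (c s) = s powr \<epsilon> * normE (c 1)"
proof -
  obtain \<epsilon> :: real where \<epsilon>: "\<epsilon> = 1 \<or> \<epsilon> = -1" "\<And>l. l > 0 \<Longrightarrow> cmod (alpha l) = l powr (\<epsilon> * 2)"
    using norm_alpha_powr by blast
  have "K s = of_real (s powr (2 * \<epsilon>)) * K 1 \<and> normE (c s) = s powr \<epsilon> * normE (c 1)"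
    if "s > 0" for s
  proof (cases "s = 1")
    case False
    define l where "l = sqrt s"
    have l: "l > 0" "l \<noteq> 1" "l\<^sup>2 = s"
      using that False by (simp_all add: l_def)
    have "cmod (alpha l) = s powr \<epsilon>"
      using \<epsilon>(2)[OF l(1)] that by (simp add: l_def powr_half_sqrt[symmetric] powr_powr)
    moreover have "(s powr \<epsilon>)\<^sup>2 = s powr (2 * \<epsilon>)"
      by (simp add: power2_eq_square powr_add[symmetric])
    ultimately show ?thesis
      using K_c_scale[OF l(1,2), of 1] l(3) by simp
  qed simp
  then show ?thesis
    using that \<epsilon>(1) by blast
qed

lemma T_E:
  assumes "e \<in> E"
  shows "T b e = frame_comb (- Bf (E_proj (T b e)) (c b)) 0 (E_proj (T b e))"
    and "normE (E_proj (T b e)) = normE e"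
proof -
  have w: "T b e \<in> l2" "Bf (T b e) \<eta>1 = 0" "Bf (T b e) (T b \<eta>2) = 0"
    using assms E_l2 UB_Bf[OF T_UB E_l2[OF assms] l2_\<eta>(1), of b]
      UB_Bf[OF T_UB E_l2[OF assms] l2_\<eta>(2), of b]
    by (simp_all add: T_l2 T_\<eta>1)
  define x where "x = Bf (T b e) \<eta>2"
  define e' where "e' = E_proj (T b e)"
  have e': "e' \<in> E"
    using w(1) by (simp add: e'_def E_proj_in_E)
  have "T b e = frame_comb x (Bf (T b e) \<eta>1) e'"
    unfolding x_def e'_def by (rule frame_decomp)
  with w(2) have Tbe: "T b e = frame_comb x 0 e'"
    by (simp only:)
  have "Bf e' e' = Bf (T b e) (T b e)"
    unfolding Tbe by (simp add: Bf_frame_comb e')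
  then have "normE e' = normE e"
    using UB_Bf[OF T_UB E_l2[OF assms] E_l2[OF assms]] by (simp add: normE_def)
  then show "normE (E_proj (T b e)) = normE e"
    unfolding e'_def .
  have "x + Bf e' (c b) = 0"
    using w(3) unfolding Tbe T_\<eta>2 by (simp add: Bf_frame_comb e' c_E)
  then have "x = - Bf e' (c b)"
    by (simp add: eq_neg_iff_add_eq_0)
  then have "T b e = frame_comb (- Bf e' (c b)) 0 e'"
    using Tbe by simp
  then show "T b e = frame_comb (- Bf (E_proj (T b e)) (c b)) 0 (E_proj (T b e))"
    unfolding e'_def .
qed

lemma c_add:
  shows "c (b1 + b2) = vadd (c b1) (E_proj (T b1 (c b2)))"
    and "K (b1 + b2) = K b1 + K b2 - Bf (E_proj (T b1 (c b2))) (c b1)"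
proof -
  define e' where "e' = E_proj (T b1 (c b2))"
  have e': "e' \<in> E"
    unfolding e'_def by (rule E_proj_in_E[OF T_l2[OF E_l2[OF c_E]]])
  have "T b1 (c b2) = frame_comb (- Bf e' (c b1)) 0 e'"
    using T_E(1)[OF c_E, of b1 b2] unfolding e'_def[symmetric] .
  then have "T b1 (frame_comb (K b2) 1 (c b2))
      = frame_comb (K b1 + K b2 - Bf e' (c b1)) 1 (vadd (c b1) e')"
    using c_E E_l2
    by (simp add: UB_frame_comb T_UB T_\<eta>1 T_\<eta>2)
      (simp add: frame_comb_def fun_eq_iff vadd_apply vscale_apply algebra_simps)
  moreover have "frame_comb (K (b1 + b2)) 1 (c (b1 + b2)) = T b1 (frame_comb (K b2) 1 (c b2))"
    by (simp only: T_\<eta>2[symmetric] T_add[OF l2_\<eta>(2)])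
  ultimately have "frame_comb (K (b1 + b2)) 1 (c (b1 + b2))
      = frame_comb (K b1 + K b2 - Bf e' (c b1)) 1 (vadd (c b1) e')"
    by simp
  note inj = frame_comb_inject(1,3)[OF c_E E_vadd[OF c_E e'] this]
  show "c (b1 + b2) = vadd (c b1) (E_proj (T b1 (c b2)))"
    using inj(2) unfolding e'_def .
  show "K (b1 + b2) = K b1 + K b2 - Bf (E_proj (T b1 (c b2))) (c b1)"
    using inj(1) unfolding e'_def .
qed

lemma normE_c_one_eq_0_if_contracting:
  assumes "\<And>s. s > 0 \<Longrightarrow> normE (c s) = normE (c 1) / s"
  shows "normE (c 1) = 0"
proof -
  define e' where "e' = E_proj (T (1/4) (c (3/4)))"
  have "e' \<in> E" "normE e' = normE (c (3/4))" "c 1 = vadd (c (1/4)) e'"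
    using E_proj_in_E[OF T_l2[OF E_l2[OF c_E]]] T_E(2)[OF c_E] c_add(1)[of "1/4" "3/4"]
    by (simp_all add: e'_def)
  then have "normE (c (1/4)) - normE (c (3/4)) \<le> normE (c 1)"
    using normE_triangle_rev[OF c_E, of e' "1/4"] by simp
  then have "normE (c 1) \<le> 0"
    using assms[of "1/4"] assms[of "3/4"] by simp
  then show ?thesis
    using normE_nonneg[OF c_E, of 1] by linarith
qed

lemma c_collinear_if_expanding:
  assumes hom: "\<And>s. s > 0 \<Longrightarrow> normE (c s) = s * normE (c 1)"
    and "normE (c 1) > 0" "b1 > 0" "b2 > 0"
  shows "\<exists>x. T b1 (c b2) = frame_comb x 0 (vscale (of_real (b2 / b1)) (c b1))"
    and "c (b1 + b2) = vscale (of_real ((b1 + b2) / b1)) (c b1)"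
proof -
  define e' where "e' = E_proj (T b1 (c b2))"
  have e': "e' \<in> E" "normE e' = normE (c b2)" "c (b1 + b2) = vadd (c b1) e'"
    using E_proj_in_E[OF T_l2[OF E_l2[OF c_E]]] T_E(2)[OF c_E] c_add(1)
    by (simp_all add: e'_def)
  have Tc: "T b1 (c b2) = frame_comb (- Bf e' (c b1)) 0 e'"
    using T_E(1)[OF c_E, of b1 b2] unfolding e'_def[symmetric] .
  have "normE (vadd (c b1) e') = normE (c b1) + normE e'"
    using e'(2,3) hom[of b1] hom[of b2] hom[of "b1 + b2"] assms(3,4) by (simp add: algebra_simps)
  moreover have "normE (c b1) > 0"
    using hom[of b1] assms(2,3) by simp
  ultimately have "e' = vscale (of_real (normE e' / normE (c b1))) (c b1)"
    by (rule normE_triangle_eq[OF c_E e'(1)])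
  also have "normE e' / normE (c b1) = b2 / b1"
    using e'(2) hom[of b1] hom[of b2] assms(2-4) by simp
  finally have e'': "e' = vscale (of_real (b2 / b1)) (c b1)" .
  then show "\<exists>x. T b1 (c b2) = frame_comb x 0 (vscale (of_real (b2 / b1)) (c b1))"
    using Tc by blast
  have "c (b1 + b2) = vadd (c b1) (vscale (of_real (b2 / b1)) (c b1))"
    using e'(3) e'' by simp
  also have "\<dots> = vscale (of_real ((b1 + b2) / b1)) (c b1)"
    using assms(3) by (simp add: fun_eq_iff vadd_apply vscale_apply field_simps)
  finally show "c (b1 + b2) = vscale (of_real ((b1 + b2) / b1)) (c b1)" .
qed

lemma c_linear_if_expanding:
  assumes hom: "\<And>s. s > 0 \<Longrightarrow> normE (c s) = s * normE (c 1)"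
    and n: "normE (c 1) > 0" and "s > 0"
  shows "c s = vscale (of_real s) (c 1)"
    and "\<exists>x. T s (c 1) = frame_comb x 0 (c 1)"
proof -
  show lin: "c s = vscale (of_real s) (c 1)"
  proof (cases "s < 1")
    case True
    then have "c 1 = vscale (of_real (1 / s)) (c s)"
      using c_collinear_if_expanding(2)[OF hom n, of s "1 - s"] \<open>s > 0\<close> by simp
    then show ?thesis
      using \<open>s > 0\<close> by (simp add: vscale_vscale)
  next
    case False
    then show ?thesis
      using c_collinear_if_expanding(2)[OF hom n, of 1 "s - 1"] by (cases "s = 1") simp_all
  qed
  show "\<exists>x. T s (c 1) = frame_comb x 0 (c 1)"
    using c_collinear_if_expanding(1)[OF hom n, of s 1] lin \<open>s > 0\<close> by (simp add: vscale_vscale)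
qed

lemma c_linear_on_pos:
  obtains v where "v \<in> E" "\<And>s. s > 0 \<Longrightarrow> c s = vscale (of_real s) v"
    "\<And>b. b > 0 \<Longrightarrow> \<exists>x. T b v = frame_comb x 0 v"
proof -
  obtain \<epsilon> :: real where \<epsilon>: "\<epsilon> = 1 \<or> \<epsilon> = -1"
    and "\<And>s. s > 0 \<Longrightarrow> K s = of_real (s powr (2 * \<epsilon>)) * K 1"
    and hom: "\<And>s. s > 0 \<Longrightarrow> normE (c s) = s powr \<epsilon> * normE (c 1)"
    using K_c_homogeneous by blast
  show ?thesis
  proof (cases "normE (c 1) = 0")
    case True
    then have "c s = vscale (of_real s) vzero" if "s > 0" for s
      using hom[OF that] normE_eq_0_iff[OF c_E] by simp
    moreover have "\<exists>x. T b vzero = frame_comb x 0 vzero" for b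
      by (intro exI[of _ 0]) (simp add: UB_vzero[OF T_UB] frame_comb_vzero)
    ultimately show ?thesis
      using that[OF E_vzero] by blast
  next
    case False
    then have n: "normE (c 1) > 0"
      using normE_nonneg[OF c_E, of 1] by linarith
    have "\<epsilon> \<noteq> -1"
    proof
      assume "\<epsilon> = -1"
      then have "normE (c s) = normE (c 1) / s" if "s > 0" for s
        using hom[OF that] that by simp
      then have "normE (c 1) = 0"
        by (rule normE_c_one_eq_0_if_contracting)
      then show False
        using n by simp
    qed
    then have "normE (c s) = s * normE (c 1)" if "s > 0" for s
      using \<epsilon> hom[OF that] that by simp
    then show ?thesis
      using that[OF c_E] c_linear_if_expanding[OF _ n] by blast
  qed
qed

lemma T_neg:
  assumes "v \<in> E" "T b v = frame_comb x 0 v"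
  shows "T (- b) v = frame_comb (- x) 0 v"
proof -
  have "v = T (- b) (T b v)"
    using T_add[OF E_l2[OF assms(1)], of "- b" b] T_zero E_l2[OF assms(1)] by simp
  also have "\<dots> = frame_comb x 0 (T (- b) v)"
    by (simp add: assms(2) UB_frame_comb[OF T_UB E_l2[OF assms(1)]] T_\<eta>1)
      (simp add: frame_comb_def)
  finally have "v n = x * \<eta>1 n + T (- b) v n" for n
    by (rule fun_cong[elim_format]) (simp add: frame_comb_def vadd_apply vscale_apply)
  then show ?thesis
    by (simp add: frame_comb_def fun_eq_iff vadd_apply vscale_apply algebra_simps)
qed

lemma c_linear:
  obtains v where "v \<in> E" "\<And>b. c b = vscale (of_real b) v" "\<And>b. \<exists>x. T b v = frame_comb x 0 v"
proof -
  obtain v where v: "v \<in> E" "\<And>s. s > 0 \<Longrightarrow> c s = vscale (of_real s) v"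
    and Tv_pos: "\<And>b. b > 0 \<Longrightarrow> \<exists>x. T b v = frame_comb x 0 v"
    using c_linear_on_pos by blast
  have Tv: "\<exists>x. T b v = frame_comb x 0 v" for b
  proof (cases b "0::real" rule: linorder_cases)
    case equal
    then have "T b v = frame_comb 0 0 v"
      using T_zero[OF E_l2[OF v(1)]] by (simp add: frame_comb_vzero)
    then show ?thesis
      by blast
  next
    case less
    then obtain x where "T (- b) v = frame_comb x 0 v"
      using Tv_pos[of "- b"] by auto
    then have "T b v = frame_comb (- x) 0 v"
      using T_neg[OF v(1), of "- b" x] by simp
    then show ?thesis
      by blast
  qed (rule Tv_pos)
  have "c b = vscale (of_real b) v" if "b < 0" for b
  proof -
    obtain x where x: "T b v = frame_comb x 0 v"
      using Tv by blast
    have "T b (c (- b)) = frame_comb (of_real (- b) * x) 0 (vscale (of_real (- b)) v)"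
      using v(2)[of "- b"] that x E_l2[OF v(1)] by (simp add: UB_vscale[OF T_UB] vscale_frame_comb)
    then have "E_proj (T b (c (- b))) = vscale (of_real (- b)) v"
      by (simp add: E_proj_frame_comb E_vscale v(1))
    then show ?thesis
      using c_add(1)[of b "- b"] K_c_zero(2)
      by (simp add: fun_eq_iff vadd_apply vscale_apply vzero_def add_eq_0_iff)
  qed
  then have "c b = vscale (of_real b) v" for b
    using v(2) K_c_zero(2) by (cases b "0::real" rule: linorder_cases) simp_all
  then show ?thesis
    using that v(1) Tv by blast
qed

lemma Im_K_add: "Im (K (b1 + b2)) = Im (K b1) + Im (K b2)"
proof -
  obtain v where v: "v \<in> E" "\<And>b. c b = vscale (of_real b) v" "\<And>b. \<exists>x. T b v = frame_comb x 0 v"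
    using c_linear by blast
  obtain x where x: "T b1 v = frame_comb x 0 v"
    using v(3) by blast
  have "T b1 (c b2) = frame_comb (of_real b2 * x) 0 (vscale (of_real b2) v)"
    using x E_l2[OF v(1)] by (simp add: v(2) UB_vscale[OF T_UB] vscale_frame_comb)
  then have "E_proj (T b1 (c b2)) = vscale (of_real b2) v"
    by (simp add: E_proj_frame_comb E_vscale v(1))
  then have "Bf (E_proj (T b1 (c b2))) (c b1) = of_real (b2 * b1 * Re (Bf v v))"
    using E_l2[OF v(1)] Bf_self_real[OF E_l2[OF v(1)]]
    by (simp add: v(2) Bf_vscale_left Bf_vscale_right l2_vscale)
  then show ?thesis
    using c_add(2)[of b1 b2] by simp
qed

lemma Im_K_eq_0: "Im (K b) = 0"
proof -
  obtain \<epsilon> :: real where \<epsilon>: "\<epsilon> = 1 \<or> \<epsilon> = -1"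
    and hom: "\<And>s. s > 0 \<Longrightarrow> K s = of_real (s powr (2 * \<epsilon>)) * K 1"
    and "\<And>s. s > 0 \<Longrightarrow> normE (c s) = s powr \<epsilon> * normE (c 1)"
    using K_c_homogeneous by blast
  have "2 powr (2 * \<epsilon>) \<noteq> 2"
    using \<epsilon> by (auto simp: powr_minus_divide)
  moreover have "2 powr (2 * \<epsilon>) * Im (K 1) = 2 * Im (K 1)"
    using hom[of 2] Im_K_add[of 1 1] by simp
  ultimately have "Im (K 1) = 0"
    by simp
  then have pos: "Im (K s) = 0" if "s > 0" for s
    using hom[OF that] by simp
  show ?thesis
  proof (cases b "0::real" rule: linorder_cases)
    case less
    then show ?thesis
      using Im_K_add[of b "- b"] pos[of "- b"] K_c_zero(1) by simp
  qed (simp_all add: K_c_zero(1) pos)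
qed

lemma rho_gmat_preserves_ends:
  assumes fixes_\<eta>2: "\<And>b. T b \<eta>2 = \<eta>2" and "l > 0"
  shows "preserves_ends (rho (gmat l x))"
proof -
  have "preserves_ends (T y)" for y
    using same_line_refl by (simp add: preserves_ends_def T_\<eta>1 fixes_\<eta>2)
  then have unip: "preserves_ends (rho (gmat 1 y))" for y
    using preserves_ends_proj_eq[OF proj_eq_sym[OF T_proj_eq]] by blast
  have hyp: "preserves_ends (rho (gmat l 0))"
  proof (cases "l = 1")
    case False
    then show ?thesis
      using diagonal_preserves_ends[OF diagonal_rho_gmat[OF assms(2)]] by simp
  qed (use unip in simp)
  have "gmat l 0 ** gmat 1 (x / l) = gmat l x"
    using assms(2) by (simp add: gmat_mult)
  then have "proj_eq (rho (gmat l x)) (rho (gmat l 0) \<circ> rho (gmat 1 (x / l)))"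
    using rho_mult[OF gmat_in_SU11 gmat_in_SU11, of l 1 0 "x / l"] assms(2) by simp
  moreover have "preserves_ends (rho (gmat l 0) \<circ> rho (gmat 1 (x / l)))"
    using preserves_ends_comp[OF rho_UB[OF gmat_in_SU11] hyp unip] assms(2) by simp
  ultimately show ?thesis
    by (rule preserves_ends_proj_eq)
qed

text \<open>\<open>rho weyl\<close> conjugates \<open>rho (gmat 2 0)\<close> to \<open>rho (gmat (1/2) 0)\<close>, so it maps the
  isotropic eigenvectors \<open>\<eta>1, \<eta>2\<close> of the former to isotropic eigenvectors of the latter.\<close>

lemma rho_weyl_preserves_ends: "preserves_ends (rho weyl)"
proof -
  define W A Ah where "W = rho weyl" "A = rho (gmat 2 0)" "Ah = rho (gmat (1/2) 0)"
  have W: "W \<in> UB"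
    by (simp add: W_A_Ah_def rho_UB weyl_in_SU11)
  have "proj_eq (W \<circ> A) (rho (weyl ** gmat 2 0))"
    using proj_eq_sym[OF rho_mult[OF weyl_in_SU11 gmat_in_SU11, of 2 0]] by (simp add: W_A_Ah_def)
  also have "proj_eq (rho (weyl ** gmat 2 0)) (Ah \<circ> W)"
    using rho_mult[OF gmat_in_SU11 weyl_in_SU11, of "1/2" 0] weyl_gmat[of 2] by (simp add: W_A_Ah_def)
  finally obtain u where u: "cmod u = 1" "\<And>v. v \<in> l2 \<Longrightarrow> W (A v) = vscale u (Ah (W v))"
    unfolding proj_eq_def by auto
  have Ah: "diagonal Ah (alpha (1/2)) (beta (1/2))" "cmod (alpha (1/2)) \<noteq> 1"
    using diagonal_rho_gmat[of "1/2"] abs_ln_norm_alpha[of "1/2"] by (auto simp: W_A_Ah_def)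
  have image: "same_line \<eta>1 (W v) \<or> same_line \<eta>2 (W v)" if "isotropic v" "A v = vscale \<mu> v" for v \<mu>
  proof (rule diagonal_isotropic_eigenvector[OF Ah])
    show "isotropic (W v)"
      using UB_isotropic[OF W that(1)] .
    have "vscale \<mu> (W v) = W (A v)"
      using that W by (simp add: isotropic_def UB_vscale)
    also have "\<dots> = vscale u (Ah (W v))"
      using u(2) that(1) by (simp add: isotropic_def)
    finally have "vscale \<mu> (W v) = vscale u (Ah (W v))" .
    then have "vscale (1 / u) (vscale \<mu> (W v)) = Ah (W v)"
      using u(1) by (auto simp: vscale_vscale)
    then show "Ah (W v) = vscale (\<mu> / u) (W v)"
      by (simp add: vscale_vscale)
  qed
  have "diagonal A (alpha 2) (beta 2)"
    using diagonal_rho_gmat[of 2] by (simp add: W_A_Ah_def)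
  then show ?thesis
    using preserves_ends_if_ends_to_ends[OF W] image[OF isotropic_\<eta>1] image[OF isotropic_\<eta>2]
    by (simp add: W_A_Ah_def diagonal_def)
qed

lemma rho_preserves_ends:
  assumes fixes_\<eta>2: "\<And>b. T b \<eta>2 = \<eta>2" and g: "g \<in> SU11"
  shows "preserves_ends (rho g)"
proof -
  have bruhat_cell: "preserves_ends (rho (gmat 1 x ** weyl ** gmat l y))" if "l > 0" for x l y
  proof -
    have g1: "gmat 1 x ** weyl \<in> SU11" "gmat l y \<in> SU11"
      using that by (simp_all add: SU11_mult gmat_in_SU11 weyl_in_SU11)
    have "preserves_ends (rho (gmat 1 x) \<circ> rho weyl)"
      by (rule preserves_ends_comp[OF rho_UB[OF gmat_in_SU11] rho_gmat_preserves_ends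
            rho_weyl_preserves_ends]) (simp_all add: fixes_\<eta>2)
    then have "preserves_ends (rho (gmat 1 x ** weyl))"
      using preserves_ends_proj_eq rho_mult[OF gmat_in_SU11 weyl_in_SU11, of 1 x] by simp
    then have "preserves_ends (rho (gmat 1 x ** weyl) \<circ> rho (gmat l y))"
      using preserves_ends_comp[OF rho_UB[OF g1(1)]] rho_gmat_preserves_ends[OF fixes_\<eta>2 that]
      by blast
    then show ?thesis
      using preserves_ends_proj_eq rho_mult[OF g1] by blast
  qed
  have uminus: "preserves_ends (rho (- h))" if "h \<in> SU11" "preserves_ends (rho h)" for h
    using preserves_ends_proj_eq[OF rho_uminus[OF that(1)] that(2)] .
  from SU11_bruhat[OF g] consider
      (upper) l x where "l > 0" "g = gmat l x \<or> g = - gmat l x"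
    | (big_cell) x l y where "l > 0"
        "g = gmat 1 x ** weyl ** gmat l y \<or> g = - (gmat 1 x ** weyl ** gmat l y)"
    by blast
  then show ?thesis
  proof cases
    case upper
    then show ?thesis
      using rho_gmat_preserves_ends[OF fixes_\<eta>2] uminus gmat_in_SU11 by auto
  next
    case big_cell
    moreover have "gmat 1 x ** weyl ** gmat l y \<in> SU11"
      using \<open>l > 0\<close> by (simp add: SU11_mult gmat_in_SU11 weyl_in_SU11)
    ultimately show ?thesis
      using bruhat_cell[OF \<open>l > 0\<close>] uminus by auto
  qed
qed

lemma c_nonzero:
  assumes "non_elementary rho"
  shows "\<exists>b. c b \<noteq> vzero"
proof (rule ccontr)
  assume "\<not> (\<exists>b. c b \<noteq> vzero)"
  then have c0: "c b = vzero" for b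
    by blast
  have "K b + cnj (K b) = 0" for b
    using UB_Bf[OF T_UB l2_\<eta>(2) l2_\<eta>(2), of b] by (simp add: T_\<eta>2 c0 Bf_frame_comb)
  then have "K b = 0" for b
    using Im_K_eq_0[of b] by (simp add: complex_eq_iff)
  then have "T b \<eta>2 = \<eta>2" for b
    by (simp add: T_\<eta>2 c0 frame_comb_vzero)
  then have "\<forall>g\<in>SU11. preserves_ends (rho g)"
    using rho_preserves_ends by blast
  moreover have "\<not> (\<forall>g\<in>SU11. preserves_ends (rho g))"
    using assms isotropic_\<eta>1 isotropic_\<eta>2 \<eta>_not_same_line
    unfolding non_elementary_def preserves_ends_def by blast
  ultimately show False
    by blast
qed

end

theorem mainTheorem10:
  fixes rho :: "complex^2^2 \<Rightarrow> vec \<Rightarrow> vec"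
    and \<eta>1 \<eta>2 :: vec
    and T :: "real \<Rightarrow> vec \<Rightarrow> vec"
    and K :: "real \<Rightarrow> complex"
    and c :: "real \<Rightarrow> vec"
  assumes rep: "representation rho"
    and nonel: "non_elementary rho"
    and ell: "has_ell rho 2"
    and eta1: "isotropic \<eta>1"
      "\<forall>l>0. \<forall>b. same_line \<eta>1 (rho (gmat l b) \<eta>1)"
    and eta2: "isotropic \<eta>2" "\<not> same_line \<eta>1 \<eta>2"
      "\<forall>l>0. l \<noteq> 1 \<longrightarrow> same_line \<eta>2 (rho (gmat l 0) \<eta>2)"
    and norm: "Bf \<eta>1 \<eta>2 = 1"
    and lift: "\<forall>b. T b \<in> UB \<and> proj_eq (T b) (rho (gmat 1 b)) \<and> T b \<eta>1 = \<eta>1"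
    and decomp: "\<forall>b. T b \<eta>2 = vadd (vadd (vscale (K b) \<eta>1) \<eta>2) (c b)
                    \<and> c b \<in> l2 \<and> Bf (c b) \<eta>1 = 0 \<and> Bf (c b) \<eta>2 = 0"
  shows "(\<forall>b1 b2. c (b1 + b2) = vadd (c b1) (c b2))
       \<and> (\<forall>r b. c (r * b) = vscale (complex_of_real r) (c b))
       \<and> (\<exists>b. c b \<noteq> vzero)
       \<and> (\<forall>b. Im (K b) = 0)"
proof -
  interpret unipotent_lift \<eta>1 \<eta>2 rho T K c
    using rep ell eta1 eta2(1,3) norm lift decomp by unfold_locales blast+
  obtain v where "\<And>b. c b = vscale (of_real b) v"
    using c_linear by blast
  then have "c (b1 + b2) = vadd (c b1) (c b2)" "c (r * b) = vscale (of_real r) (c b)" for b1 b2 r b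
    by (simp_all add: fun_eq_iff vadd_apply vscale_apply algebra_simps)
  then show ?thesis
    using c_nonzero[OF nonel] Im_K_eq_0 by blast
qed

end
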